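(* Let $R$ be a commutative Noetherian ring, $\alpha$ an automorphism of $R$, and suppose $S=R[\theta;\alpha]$ is a prime ring. Then: (a) $R$ is $\alpha$-prime, and there exist $n\in\mathbb N$ and a prime ideal $Q$ of $R$ such that $\{Q,\alpha(Q),\ldots,\alpha^{n-1}(Q)\}$ is the set of minimal primes of $R$ (with $\alpha^n(Q)=Q$) and $\bigcap_{i=0}^{n-1}\alpha^i(Q)=(0)$. (b) With $Q,n$ as in (a), if $S$ is primitive then $(R/Q)[\theta^n;\alpha^n]$ is primitive (where $\alpha^n$ denotes the induced automorphism of $R/Q$).
   Context: $R[\theta;\alpha]$: skew polynomial ring with $\theta r=\alpha(r)\theta$. An ideal $P$ of $R$ with $\alpha(P)=P$ is $\alpha$-prime if for all $\alpha$-stable ideals $I,J$, $IJ\subseteq P$ implies $I\subseteq P$ or $J\subseteq P$; $R$ is $\alpha$-prime if $(0)$ is $\alpha$-prime. A ring is primitive if it has a faithful simple right module. *)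

theory Defs
  imports "HOL-Algebra.Ring_Divisibility" "HOL-Algebra.Ideal_Product" "HOL-Algebra.QuotRing"
begin

text \<open>Skew polynomial ring R[theta; alpha] with theta r = alpha(r) theta.
  Elements are finitely supported coefficient sequences f, standing for
  sum_i f(i) theta^i (coefficients on the left).  Hence
  (a theta^i)(b theta^j) = a alpha^i(b) theta^(i+j).\<close>

definition skew_poly :: "('a, 'b) ring_scheme \<Rightarrow> ('a \<Rightarrow> 'a) \<Rightarrow> (nat \<Rightarrow> 'a) ring" where
  "skew_poly R \<alpha> =
     \<lparr> carrier = {f. (\<forall>i. f i \<in> carrier R) \<and> finite {i. f i \<noteq> \<zero>\<^bsub>R\<^esub>}},
       mult = (\<lambda>f g k. \<Oplus>\<^bsub>R\<^esub> i \<in> {..k}. f i \<otimes>\<^bsub>R\<^esub> (\<alpha> ^^ i) (g (k - i))),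
       one = (\<lambda>k. if k = 0 then \<one>\<^bsub>R\<^esub> else \<zero>\<^bsub>R\<^esub>),
       zero = (\<lambda>k. \<zero>\<^bsub>R\<^esub>),
       add = (\<lambda>f g k. f k \<oplus>\<^bsub>R\<^esub> g k) \<rparr>"

definition alpha_prime_ideal :: "('a, 'b) ring_scheme \<Rightarrow> ('a \<Rightarrow> 'a) \<Rightarrow> 'a set \<Rightarrow> bool" where
  "alpha_prime_ideal R \<alpha> P \<longleftrightarrow>
     ideal P R \<and> \<alpha> ` P = P \<and>
     (\<forall>I J. ideal I R \<and> ideal J R \<and> \<alpha> ` I = I \<and> \<alpha> ` J = J \<and> ideal_prod R I J \<subseteq> P
        \<longrightarrow> I \<subseteq> P \<or> J \<subseteq> P)"

definition alpha_prime_ring :: "('a, 'b) ring_scheme \<Rightarrow> ('a \<Rightarrow> 'a) \<Rightarrow> bool" where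
  "alpha_prime_ring R \<alpha> \<longleftrightarrow> alpha_prime_ideal R \<alpha> {\<zero>\<^bsub>R\<^esub>}"

definition prime_ring :: "('a, 'b) ring_scheme \<Rightarrow> bool" where
  "prime_ring S \<longleftrightarrow> ring S \<and> carrier S \<noteq> {\<zero>\<^bsub>S\<^esub>} \<and>
     (\<forall>I J. ideal I S \<and> ideal J S \<and> ideal_prod S I J \<subseteq> {\<zero>\<^bsub>S\<^esub>}
        \<longrightarrow> I \<subseteq> {\<zero>\<^bsub>S\<^esub>} \<or> J \<subseteq> {\<zero>\<^bsub>S\<^esub>})"

definition minimal_prime :: "('a, 'b) ring_scheme \<Rightarrow> 'a set \<Rightarrow> bool" where
  "minimal_prime R P \<longleftrightarrow> primeideal P R \<and> (\<forall>P'. primeideal P' R \<and> P' \<subseteq> P \<longrightarrow> P' = P)"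

definition right_module ::
  "('c, 'b) ring_scheme \<Rightarrow> 'm set \<Rightarrow> ('m \<Rightarrow> 'm \<Rightarrow> 'm) \<Rightarrow> 'm \<Rightarrow> ('m \<Rightarrow> 'c \<Rightarrow> 'm) \<Rightarrow> bool" where
  "right_module T M madd mzero act \<longleftrightarrow>
     ring T \<and> comm_group \<lparr> carrier = M, mult = madd, one = mzero \<rparr> \<and>
     (\<forall>m\<in>M. \<forall>r\<in>carrier T. act m r \<in> M) \<and>
     (\<forall>m\<in>M. \<forall>r\<in>carrier T. \<forall>s\<in>carrier T. act m (r \<oplus>\<^bsub>T\<^esub> s) = madd (act m r) (act m s)) \<and>
     (\<forall>m\<in>M. \<forall>m'\<in>M. \<forall>r\<in>carrier T. act (madd m m') r = madd (act m r) (act m' r)) \<and>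
     (\<forall>m\<in>M. \<forall>r\<in>carrier T. \<forall>s\<in>carrier T. act m (r \<otimes>\<^bsub>T\<^esub> s) = act (act m r) s) \<and>
     (\<forall>m\<in>M. act m \<one>\<^bsub>T\<^esub> = m)"

definition submodule ::
  "('c, 'b) ring_scheme \<Rightarrow> 'm set \<Rightarrow> 'm set \<Rightarrow> ('m \<Rightarrow> 'm \<Rightarrow> 'm) \<Rightarrow> 'm \<Rightarrow> ('m \<Rightarrow> 'c \<Rightarrow> 'm) \<Rightarrow> bool" where
  "submodule T N M madd mzero act \<longleftrightarrow>
     subgroup N \<lparr> carrier = M, mult = madd, one = mzero \<rparr> \<and>
     (\<forall>m\<in>N. \<forall>r\<in>carrier T. act m r \<in> N)"

definition simple_right_module ::
  "('c, 'b) ring_scheme \<Rightarrow> 'm set \<Rightarrow> ('m \<Rightarrow> 'm \<Rightarrow> 'm) \<Rightarrow> 'm \<Rightarrow> ('m \<Rightarrow> 'c \<Rightarrow> 'm) \<Rightarrow> bool" where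
  "simple_right_module T M madd mzero act \<longleftrightarrow>
     right_module T M madd mzero act \<and> M \<noteq> {mzero} \<and>
     (\<forall>N. submodule T N M madd mzero act \<longrightarrow> N = {mzero} \<or> N = M)"

definition faithful_right_module ::
  "('c, 'b) ring_scheme \<Rightarrow> 'm set \<Rightarrow> ('m \<Rightarrow> 'm \<Rightarrow> 'm) \<Rightarrow> 'm \<Rightarrow> ('m \<Rightarrow> 'c \<Rightarrow> 'm) \<Rightarrow> bool" where
  "faithful_right_module T M madd mzero act \<longleftrightarrow>
     right_module T M madd mzero act \<and>
     (\<forall>r\<in>carrier T. (\<forall>m\<in>M. act m r = mzero) \<longrightarrow> r = \<zero>\<^bsub>T\<^esub>)"

text \<open>Since a simple module is cyclic, hence a quotient of T, it is isomorphic to a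
  module whose elements are subsets of the carrier type of T; so it is no loss of
  generality to take module elements of type 'c set.\<close>

definition primitive :: "('c, 'b) ring_scheme \<Rightarrow> bool" where
  "primitive T \<longleftrightarrow>
     (\<exists>(M :: 'c set set) madd mzero act.
        simple_right_module T M madd mzero act \<and> faithful_right_module T M madd mzero act)"

end

theory Submission
  imports Defs "HOL-Algebra.Subrings"
begin

lemma funpow_ring_iso:
  assumes "ring R" and "h \<in> ring_iso R R"
  shows "h ^^ i \<in> ring_iso R R"
proof (induction i)
  case 0
  then show ?case using id_ring_hom[of R] by (simp add: ring_iso_def bij_betw_def id_def)
next
  case (Suc i)
  have "h ^^ i \<in> ring_hom R R" "bij_betw (h ^^ i) (carrier R) (carrier R)"
    using Suc unfolding ring_iso_def by auto
  moreover have "h \<in> ring_hom R R" "bij_betw h (carrier R) (carrier R)"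
    using assms(2) unfolding ring_iso_def by auto
  ultimately have "h \<circ> (h ^^ i) \<in> ring_iso R R"
    unfolding ring_iso_def by (blast intro: ring_hom_trans bij_betw_trans)
  then show ?case by (simp only: funpow.simps)
qed

lemma (in ring) finsum_in_ideal:
  assumes I: "ideal I R" and f: "\<And>i. i \<in> A \<Longrightarrow> f i \<in> I"
  shows "finsum R f A \<in> I"
  using f
proof (induction A rule: infinite_finite_induct)
  case (insert x F)
  interpret I: ideal I R by (rule I)
  have "finsum R f (insert x F) = f x \<oplus> finsum R f F"
    using insert.hyps insert.prems by (intro finsum_insert) (auto intro: I.Icarr)
  then show ?case using insert by (simp add: I.a_closed)
qed (simp_all add: additive_subgroup.zero_closed[OF ideal.axioms(1)[OF I]] finsum_infinite)

context cring
begin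

lemma primeideal_contains_Inter:
  assumes "finite \<J>" and "\<J> \<noteq> {}" and "\<And>J. J \<in> \<J> \<Longrightarrow> ideal J R"
    and P: "primeideal P R" and "\<Inter>\<J> \<subseteq> P"
  shows "\<exists>J\<in>\<J>. J \<subseteq> P"
  using assms(1-3,5)
proof (induction \<J> rule: finite_ne_induct)
  case (insert J \<J>)
  have ideals: "ideal J' R" if "J' \<in> insert J \<J>" for J' using insert.prems(1) that .
  show ?case
  proof (rule ccontr)
    assume none: "\<not> (\<exists>J'\<in>insert J \<J>. J' \<subseteq> P)"
    then have "\<not> \<Inter>\<J> \<subseteq> P" using insert.IH ideals by blast
    then obtain y where y: "y \<in> \<Inter>\<J>" "y \<notin> P" by blast
    obtain x where x: "x \<in> J" "x \<notin> P" using none by blast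
    obtain J0 where "J0 \<in> \<J>" using insert.hyps(2) by blast
    then have yc: "y \<in> carrier R" using y(1) ideal.Icarr[OF ideals] by blast
    have xc: "x \<in> carrier R" using x(1) ideal.Icarr[OF ideals] by blast
    have "x \<otimes> y \<in> J" using ideal.I_r_closed[OF ideals x(1) yc] by simp
    moreover have "x \<otimes> y \<in> J'" if "J' \<in> \<J>" for J'
      using ideal.I_l_closed[OF ideals, of J' y x] that y(1) xc by blast
    ultimately have "x \<otimes> y \<in> P" using insert.prems(2) by blast
    then show False using primeideal.I_prime[OF P xc yc] x y by blast
  qed
qed simp

definition annihilator :: "'a set \<Rightarrow> 'a set" where
  "annihilator N = {r \<in> carrier R. \<forall>y\<in>N. r \<otimes> y = \<zero>}"

lemma annihilator_ideal:
  assumes N: "N \<subseteq> carrier R"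
  shows "ideal (annihilator N) R"
proof (rule idealI[OF ring_axioms])
  show "subgroup (annihilator N) (add_monoid R)"
  proof
    fix x y assume "x \<in> annihilator N" "y \<in> annihilator N"
    then show "x \<otimes>\<^bsub>add_monoid R\<^esub> y \<in> annihilator N"
      using N by (auto simp: annihilator_def l_distr subset_iff)
  next
    fix x assume "x \<in> annihilator N"
    then have "\<ominus> x \<in> annihilator N" using N by (auto simp: annihilator_def l_minus subset_iff)
    then show "inv\<^bsub>add_monoid R\<^esub> x \<in> annihilator N" by (simp add: a_inv_def)
  qed (use N in \<open>auto simp: annihilator_def\<close>)
next
  fix a x assume a: "a \<in> annihilator N" and x: "x \<in> carrier R"
  show "x \<otimes> a \<in> annihilator N"
    using a x N by (auto simp: annihilator_def m_assoc subset_iff)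
  then show "a \<otimes> x \<in> annihilator N"
    using a x by (simp add: annihilator_def m_comm)
qed

lemma foldr_mult_closed: "set xs \<subseteq> carrier R \<Longrightarrow> foldr (\<otimes>) xs \<one> \<in> carrier R"
  by (induction xs) auto

lemma foldr_mult_append:
  assumes "set xs \<subseteq> carrier R" "set ys \<subseteq> carrier R"
  shows "foldr (\<otimes>) (xs @ ys) \<one> = foldr (\<otimes>) xs \<one> \<otimes> foldr (\<otimes>) ys \<one>"
  using assms by (induction xs) (auto simp: m_assoc foldr_mult_closed)

text \<open>A nonzero product of maximal length of elements of a nilpotent \<open>N\<close> annihilates \<open>N\<close>.\<close>

lemma nilpotent_annihilator_nonzero:
  assumes one: "\<one> \<noteq> \<zero>" and N: "N \<subseteq> carrier R"
    and nil: "\<And>xs. length xs = k \<Longrightarrow> set xs \<subseteq> N \<Longrightarrow> foldr (\<otimes>) xs \<one> = \<zero>"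
  shows "\<not> annihilator N \<subseteq> {\<zero>}"
proof -
  define J where "J = {j. j \<le> k \<and> (\<exists>xs. length xs = j \<and> set xs \<subseteq> N \<and> foldr (\<otimes>) xs \<one> \<noteq> \<zero>)}"
  have "0 \<in> J" unfolding J_def using one by auto
  moreover have finJ: "finite J" by (rule finite_subset[of _ "{..k}"]) (auto simp: J_def)
  ultimately have "Max J \<in> J" using Max_in by blast
  define j where "j = Max J"
  obtain xs where xs: "set xs \<subseteq> N" "foldr (\<otimes>) xs \<one> \<noteq> \<zero>" and len: "length xs = j" "j \<le> k"
    using \<open>Max J \<in> J\<close> unfolding J_def j_def by blast
  have "j \<noteq> k" using nil xs len by blast
  define x where "x = foldr (\<otimes>) xs \<one>"
  have xc: "x \<in> carrier R" unfolding x_def using foldr_mult_closed xs(1) N by blast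
  have "x \<otimes> y = \<zero>" if y: "y \<in> N" for y
  proof (rule ccontr)
    assume "x \<otimes> y \<noteq> \<zero>"
    moreover have "foldr (\<otimes>) (y # xs) \<one> = x \<otimes> y"
      using m_comm[of y x] xc y N unfolding x_def by (simp add: subset_iff)
    moreover have "Suc j \<le> k" using len \<open>j \<noteq> k\<close> by simp
    moreover have "length (y # xs) = Suc j" "set (y # xs) \<subseteq> N" using len(1) xs(1) y by auto
    ultimately have "Suc j \<in> J" unfolding J_def
      by (intro CollectI conjI exI[of _ "y # xs"]) simp_all
    then have "Suc j \<le> j" using Max_ge[OF finJ] unfolding j_def by blast
    then show False by simp
  qed
  then have "x \<in> annihilator N" unfolding annihilator_def using xc by blast
  then show ?thesis using xs(2) unfolding x_def by blast
qed

end

lemma (in noetherian_ring) ideal_family_has_maximal: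
  assumes "\<SS> \<noteq> {}" and "\<SS> \<subseteq> {I. ideal I R}"
  shows "\<exists>M\<in>\<SS>. \<forall>X\<in>\<SS>. M \<subseteq> X \<longrightarrow> X = M"
proof (rule subset_Zorn_nonempty[OF assms(1)])
  fix C assume C: "C \<noteq> {}" "subset.chain \<SS> C"
  have "subset.chain {I. ideal I R} C" using C(2) assms(2) unfolding pred_on.chain_def by blast
  then have "\<Union>C \<in> C" using ideal_chain_is_trivial C(1) by blast
  then show "\<Union>C \<in> \<SS>" using C(2) unfolding pred_on.chain_def by blast
qed

context cring
begin

text \<open>The invariant of the Noetherian induction below: \<open>F\<close> is a finite set of primes over \<open>I\<close>
  containing a prime below every prime over \<open>I\<close>, and \<open>(\<Inter>F)\<^sup>k \<subseteq> I\<close>.\<close>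

definition prime_cover :: "'a set \<Rightarrow> 'a set set \<Rightarrow> nat \<Rightarrow> bool" where
  "prime_cover I F k \<longleftrightarrow> finite F \<and> (\<forall>P\<in>F. primeideal P R \<and> I \<subseteq> P) \<and>
     (\<forall>P. primeideal P R \<and> I \<subseteq> P \<longrightarrow> (\<exists>P'\<in>F. P' \<subseteq> P)) \<and>
     (\<forall>xs. length xs = k \<longrightarrow> set xs \<subseteq> carrier R \<longrightarrow> (\<forall>x\<in>set xs. \<forall>P\<in>F. x \<in> P) \<longrightarrow>
        foldr (\<otimes>) xs \<one> \<in> I)"

lemma prime_coverD:
  assumes "prime_cover I F k"
  shows "finite F" and "P \<in> F \<Longrightarrow> primeideal P R" and "P \<in> F \<Longrightarrow> I \<subseteq> P"
    and "primeideal P R \<Longrightarrow> I \<subseteq> P \<Longrightarrow> \<exists>P'\<in>F. P' \<subseteq> P"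
    and "length xs = k \<Longrightarrow> set xs \<subseteq> carrier R \<Longrightarrow> (\<And>x P. x \<in> set xs \<Longrightarrow> P \<in> F \<Longrightarrow> x \<in> P) \<Longrightarrow>
      foldr (\<otimes>) xs \<one> \<in> I"
  using assms unfolding prime_cover_def by blast+

lemma prime_cover_carrier: "prime_cover (carrier R) {} 0"
  unfolding prime_cover_def
  using primeideal.I_notcarr ideal.Icarr[OF primeideal.axioms(1)] by fastforce

lemma prime_cover_primeideal: "primeideal P R \<Longrightarrow> prime_cover P {P} 1"
  unfolding prime_cover_def by (auto simp: length_Suc_conv)

lemma mem_add_cgenideal:
  "x \<in> I <+>\<^bsub>R\<^esub> PIdl a \<longleftrightarrow> (\<exists>m\<in>I. \<exists>r\<in>carrier R. x = m \<oplus> r \<otimes> a)"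
  by (auto simp: set_add_def' cgenideal_def)

lemma add_cgenideal_ideal:
  assumes "ideal M R" "a \<in> carrier R"
  shows "ideal (M <+>\<^bsub>R\<^esub> PIdl a) R" "M \<subseteq> M <+>\<^bsub>R\<^esub> PIdl a" "a \<in> M <+>\<^bsub>R\<^esub> PIdl a"
proof -
  interpret M: ideal M R by fact
  show "ideal (M <+>\<^bsub>R\<^esub> PIdl a) R" by (rule add_ideals[OF assms(1) cgenideal_ideal[OF assms(2)]])
  show "M \<subseteq> M <+>\<^bsub>R\<^esub> PIdl a"
    unfolding mem_add_cgenideal subset_iff using assms(2) by (metis M.Icarr l_null r_zero zero_closed)
  show "a \<in> M <+>\<^bsub>R\<^esub> PIdl a"
    unfolding mem_add_cgenideal using assms(2) M.zero_closed by (metis l_one l_zero m_closed one_closed)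
qed

lemma add_cgenideal_subset_primeideal:
  assumes "primeideal P R" "M \<subseteq> P" "a \<in> P"
  shows "M <+>\<^bsub>R\<^esub> PIdl a \<subseteq> P"
proof -
  interpret P: primeideal P R by fact
  show ?thesis
  proof
    fix x assume "x \<in> M <+>\<^bsub>R\<^esub> PIdl a"
    then obtain m r where "m \<in> M" "r \<in> carrier R" "x = m \<oplus> r \<otimes> a"
      unfolding mem_add_cgenideal by blast
    then show "x \<in> P" using assms(2,3) by (simp add: P.a_closed P.I_l_closed subsetD)
  qed
qed

text \<open>If \<open>a b \<in> M\<close> with \<open>a, b \<notin> M\<close>, the covers of \<open>M + Ra\<close> and \<open>M + Rb\<close> combine to one of \<open>M\<close>,
  because \<open>(M + Ra)(M + Rb) \<subseteq> M\<close>.\<close>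

lemma prime_cover_mult:
  assumes M: "ideal M R" and ab: "a \<in> carrier R" "b \<in> carrier R" "a \<otimes> b \<in> M"
    and cov_a: "prime_cover (M <+>\<^bsub>R\<^esub> PIdl a) F1 k1" and cov_b: "prime_cover (M <+>\<^bsub>R\<^esub> PIdl b) F2 k2"
  shows "prime_cover M (F1 \<union> F2) (k1 + k2)"
proof -
  interpret M: ideal M R by (rule M)
  define Ja where "Ja = M <+>\<^bsub>R\<^esub> PIdl a"
  define Jb where "Jb = M <+>\<^bsub>R\<^esub> PIdl b"
  have MJ: "M \<subseteq> Ja" "M \<subseteq> Jb" unfolding Ja_def Jb_def using add_cgenideal_ideal M ab by auto
  have prod: "y \<otimes> z \<in> M" if y: "y \<in> Ja" and z: "z \<in> Jb" for y z
  proof -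
    obtain m1 r1 where m1: "m1 \<in> M" "r1 \<in> carrier R" "y = m1 \<oplus> r1 \<otimes> a"
      using y unfolding Ja_def mem_add_cgenideal by blast
    obtain m2 r2 where m2: "m2 \<in> M" "r2 \<in> carrier R" "z = m2 \<oplus> r2 \<otimes> b"
      using z unfolding Jb_def mem_add_cgenideal by blast
    have c: "m1 \<in> carrier R" "m2 \<in> carrier R" using m1 m2 M.Icarr by auto
    have "y \<otimes> z = m1 \<otimes> z \<oplus> ((r1 \<otimes> a) \<otimes> m2 \<oplus> (r1 \<otimes> r2) \<otimes> (a \<otimes> b))"
      using m1 m2 c ab by algebra
    moreover have "m1 \<otimes> z \<in> M" using M.I_r_closed m1 m2 c ab by simp
    moreover have "(r1 \<otimes> a) \<otimes> m2 \<in> M" using M.I_l_closed[OF m2(1)] m1 ab by simp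
    moreover have "(r1 \<otimes> r2) \<otimes> (a \<otimes> b) \<in> M" using M.I_l_closed[OF ab(3)] m1 m2 by simp
    ultimately show ?thesis by (simp add: M.a_closed)
  qed
  show ?thesis
    unfolding prime_cover_def
  proof (intro conjI allI impI ballI)
    show "finite (F1 \<union> F2)" using prime_coverD(1)[OF cov_a] prime_coverD(1)[OF cov_b] by simp
  next
    fix P assume "P \<in> F1 \<union> F2"
    then show "primeideal P R" "M \<subseteq> P"
      using prime_coverD(2,3)[OF cov_a] prime_coverD(2,3)[OF cov_b] MJ
      unfolding Ja_def Jb_def by blast+
  next
    fix P assume P: "primeideal P R \<and> M \<subseteq> P"
    then have "a \<in> P \<or> b \<in> P" using primeideal.I_prime[of P R a b] ab by blast
    then have "Ja \<subseteq> P \<or> Jb \<subseteq> P" using add_cgenideal_subset_primeideal P unfolding Ja_def Jb_def by blast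
    then show "\<exists>P'\<in>F1 \<union> F2. P' \<subseteq> P"
      using prime_coverD(4)[OF cov_a, of P] prime_coverD(4)[OF cov_b, of P] P
      unfolding Ja_def Jb_def by blast
  next
    fix xs :: "'a list" assume len: "length xs = k1 + k2" and xc: "set xs \<subseteq> carrier R"
      and xP: "\<forall>x\<in>set xs. \<forall>P\<in>F1 \<union> F2. x \<in> P"
    have yc: "set (take k1 xs) \<subseteq> carrier R" using subset_trans[OF set_take_subset xc] .
    have zc: "set (drop k1 xs) \<subseteq> carrier R" using subset_trans[OF set_drop_subset xc] .
    have "foldr (\<otimes>) (take k1 xs) \<one> \<in> Ja"
      unfolding Ja_def using len yc xP by (intro prime_coverD(5)[OF cov_a]) (auto dest: in_set_takeD)
    moreover have "foldr (\<otimes>) (drop k1 xs) \<one> \<in> Jb"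
      unfolding Jb_def using len zc xP by (intro prime_coverD(5)[OF cov_b]) (auto dest: in_set_dropD)
    ultimately show "foldr (\<otimes>) xs \<one> \<in> M"
      using prod foldr_mult_append[OF yc zc] by simp
  qed
qed

end

locale noetherian_cring = cring R + noetherian_ring R for R (structure)
begin

lemma prime_cover_exists:
  assumes "ideal I R"
  shows "\<exists>F k. prime_cover I F k"
proof (rule ccontr)
  define \<SS> where "\<SS> = {J. ideal J R \<and> \<not> (\<exists>F k. prime_cover J F k)}"
  assume "\<not> (\<exists>F k. prime_cover I F k)"
  then have "\<SS> \<noteq> {}" using assms unfolding \<SS>_def by blast
  then obtain M where M: "M \<in> \<SS>" and Mmax: "\<And>J. J \<in> \<SS> \<Longrightarrow> M \<subseteq> J \<Longrightarrow> J = M"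
    using ideal_family_has_maximal[of \<SS>] unfolding \<SS>_def by blast
  have Mi: "ideal M R" and nM: "\<not> (\<exists>F k. prime_cover M F k)" using M unfolding \<SS>_def by auto
  have covered: "\<exists>F k. prime_cover (M <+>\<^bsub>R\<^esub> PIdl a) F k" if "a \<in> carrier R" "a \<notin> M" for a
  proof -
    note J = add_cgenideal_ideal[OF Mi that(1)]
    then have "M <+>\<^bsub>R\<^esub> PIdl a \<notin> \<SS>" using Mmax that(2) by blast
    then show ?thesis using J(1) unfolding \<SS>_def by blast
  qed
  have "M \<noteq> carrier R" using nM prime_cover_carrier by blast
  moreover have "\<not> primeideal M R" using nM prime_cover_primeideal by blast
  ultimately obtain a b where ab: "a \<in> carrier R" "b \<in> carrier R" "a \<otimes> b \<in> M" "a \<notin> M" "b \<notin> M"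
    using primeidealI[OF Mi is_cring] by blast
  obtain F1 k1 where "prime_cover (M <+>\<^bsub>R\<^esub> PIdl a) F1 k1" using covered ab(1,4) by blast
  moreover obtain F2 k2 where "prime_cover (M <+>\<^bsub>R\<^esub> PIdl b) F2 k2" using covered ab(2,5) by blast
  ultimately show False using prime_cover_mult[OF Mi ab(1-3)] nM by blast
qed

end

context noetherian_cring
begin

lemma minimal_primes_finite_nilpotent:
  shows "finite {P. minimal_prime R P}"
    and "\<exists>k. \<forall>xs. length xs = k \<longrightarrow> set xs \<subseteq> carrier R \<inter> \<Inter>{P. minimal_prime R P} \<longrightarrow>
           foldr (\<otimes>) xs \<one> = \<zero>"
proof -
  obtain F k where cov: "prime_cover {\<zero>} F k" using prime_cover_exists[OF zeroideal] by blast
  have zero_in: "{\<zero>} \<subseteq> P" if "primeideal P R" for P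
    using that additive_subgroup.zero_closed[OF ideal.axioms(1)] primeideal.axioms(1) by blast
  have in_F: "P \<in> F" if "minimal_prime R P" for P
  proof -
    have P: "primeideal P R" using that unfolding minimal_prime_def by blast
    obtain P' where "P' \<in> F" "P' \<subseteq> P" using prime_coverD(4)[OF cov P zero_in[OF P]] by blast
    moreover have "primeideal P' R" using prime_coverD(2)[OF cov \<open>P' \<in> F\<close>] .
    ultimately show ?thesis using that unfolding minimal_prime_def by blast
  qed
  have below_F: "\<exists>m. minimal_prime R m \<and> m \<subseteq> P" if "P \<in> F" for P
  proof -
    obtain m where m: "m \<in> F" "m \<subseteq> P" and mmin: "\<forall>b\<in>F. b \<subseteq> m \<longrightarrow> m = b"
      using finite_has_minimal2[OF prime_coverD(1)[OF cov] \<open>P \<in> F\<close>] by blast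
    have "minimal_prime R m"
      unfolding minimal_prime_def
    proof (intro conjI allI impI)
      show "primeideal m R" using prime_coverD(2)[OF cov m(1)] .
      fix P' assume P': "primeideal P' R \<and> P' \<subseteq> m"
      obtain P'' where "P'' \<in> F" "P'' \<subseteq> P'" using prime_coverD(4)[OF cov, of P'] P' zero_in by blast
      then show "P' = m" using mmin P' by blast
    qed
    then show ?thesis using m(2) by blast
  qed
  show "finite {P. minimal_prime R P}"
    using finite_subset[OF _ prime_coverD(1)[OF cov]] in_F by blast
  show "\<exists>k. \<forall>xs. length xs = k \<longrightarrow> set xs \<subseteq> carrier R \<inter> \<Inter>{P. minimal_prime R P} \<longrightarrow>
          foldr (\<otimes>) xs \<one> = \<zero>"
  proof (intro exI allI impI)
    fix xs :: "'a list" assume "length xs = k" "set xs \<subseteq> carrier R \<inter> \<Inter>{P. minimal_prime R P}"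
    then have "foldr (\<otimes>) xs \<one> \<in> {\<zero>}" using below_F by (intro prime_coverD(5)[OF cov]) blast+
    then show "foldr (\<otimes>) xs \<one> = \<zero>" by simp
  qed
qed

end

lemma (in ring) primeideal_subset_carrier: "primeideal P R \<Longrightarrow> P \<subseteq> carrier R"
  using ideal.Icarr[of P R] primeideal.axioms(1)[of P R] by blast

locale cring_automorphism = cring R for R (structure) +
  fixes \<alpha> :: "'a \<Rightarrow> 'a"
  assumes alpha_iso: "\<alpha> \<in> ring_iso R R"
begin

lemma pow_iso: "\<alpha> ^^ i \<in> ring_iso R R"
  using funpow_ring_iso[OF ring_axioms alpha_iso] .

lemma pow_hom: "\<alpha> ^^ i \<in> ring_hom R R"
  using pow_iso[of i] unfolding ring_iso_def by blast

lemma pow_inj: "inj_on (\<alpha> ^^ i) (carrier R)"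
  using pow_iso[of i] unfolding ring_iso_def bij_betw_def by blast

sublocale pow: ring_hom_ring R R "\<alpha> ^^ i"
  by (rule ring_hom_ringI2[OF ring_axioms ring_axioms pow_hom])

lemmas pow_closed[simp] = pow.hom_closed
  and pow_mult[simp] = pow.hom_mult
  and pow_add[simp] = pow.hom_add
  and pow_one[simp] = pow.hom_one
  and pow_zero[simp] = pow.hom_zero
  and pow_minus[simp] = pow.hom_a_inv

definition \<beta> :: "'a \<Rightarrow> 'a" where "\<beta> = inv_into (carrier R) \<alpha>"

lemma alpha_hom: "\<alpha> \<in> ring_hom R R" using alpha_iso unfolding ring_iso_def by blast

lemma beta_hom: "\<beta> \<in> ring_hom R R"
  using ring_iso_set_sym[OF ring_axioms alpha_iso] unfolding \<beta>_def ring_iso_def by blast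

lemma alpha_closed[simp]: "x \<in> carrier R \<Longrightarrow> \<alpha> x \<in> carrier R"
  by (rule ring_hom_closed[OF alpha_hom])

lemma beta_closed[simp]: "x \<in> carrier R \<Longrightarrow> \<beta> x \<in> carrier R"
  by (rule ring_hom_closed[OF beta_hom])

lemma alpha_beta[simp]: "x \<in> carrier R \<Longrightarrow> \<alpha> (\<beta> x) = x"
  using alpha_iso unfolding \<beta>_def ring_iso_def by (simp add: bij_betw_def f_inv_into_f)

lemma beta_alpha[simp]: "x \<in> carrier R \<Longrightarrow> \<beta> (\<alpha> x) = x"
  using alpha_iso unfolding \<beta>_def ring_iso_def by (simp add: bij_betw_def inv_into_f_f)

lemma image_alpha_eq: "X \<subseteq> carrier R \<Longrightarrow> \<alpha> ` X = {x \<in> carrier R. \<beta> x \<in> X}"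
  by (auto simp: image_iff subset_iff) (metis alpha_beta)

lemma image_beta_eq: "X \<subseteq> carrier R \<Longrightarrow> \<beta> ` X = {x \<in> carrier R. \<alpha> x \<in> X}"
  by (auto simp: image_iff subset_iff) (metis beta_alpha)

lemma image_alpha_beta[simp]: "X \<subseteq> carrier R \<Longrightarrow> \<alpha> ` \<beta> ` X = X"
  by (force simp: image_iff)

lemma image_beta_alpha[simp]: "X \<subseteq> carrier R \<Longrightarrow> \<beta> ` \<alpha> ` X = X"
  by (force simp: image_iff)

lemma primeideal_image_alpha: "primeideal P R \<Longrightarrow> primeideal (\<alpha> ` P) R"
  using ring_hom_ring.primeideal_vimage[OF ring_hom_ringI2[OF ring_axioms ring_axioms beta_hom] is_cring]
  by (simp add: image_alpha_eq primeideal_subset_carrier)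

lemma primeideal_image_beta: "primeideal P R \<Longrightarrow> primeideal (\<beta> ` P) R"
  using ring_hom_ring.primeideal_vimage[OF ring_hom_ringI2[OF ring_axioms ring_axioms alpha_hom] is_cring]
  by (simp add: image_beta_eq primeideal_subset_carrier)

lemma minimal_prime_image_alpha:
  assumes "minimal_prime R P"
  shows "minimal_prime R (\<alpha> ` P)"
  unfolding minimal_prime_def
proof (intro conjI allI impI)
  have P: "primeideal P R" and Pmin: "\<And>P'. primeideal P' R \<Longrightarrow> P' \<subseteq> P \<Longrightarrow> P' = P"
    using assms unfolding minimal_prime_def by blast+
  show "primeideal (\<alpha> ` P) R" by (rule primeideal_image_alpha[OF P])
  fix P' assume P': "primeideal P' R \<and> P' \<subseteq> \<alpha> ` P"
  then have "\<beta> ` P' \<subseteq> P" using primeideal_subset_carrier[OF P] by (metis image_beta_alpha image_mono)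
  then have "\<beta> ` P' = P" using Pmin primeideal_image_beta P' by blast
  then show "P' = \<alpha> ` P" using P' primeideal_subset_carrier by force
qed

lemma minimal_prime_image_beta:
  assumes "minimal_prime R P"
  shows "minimal_prime R (\<beta> ` P)"
  unfolding minimal_prime_def
proof (intro conjI allI impI)
  have P: "primeideal P R" and Pmin: "\<And>P'. primeideal P' R \<Longrightarrow> P' \<subseteq> P \<Longrightarrow> P' = P"
    using assms unfolding minimal_prime_def by blast+
  show "primeideal (\<beta> ` P) R" by (rule primeideal_image_beta[OF P])
  fix P' assume P': "primeideal P' R \<and> P' \<subseteq> \<beta> ` P"
  then have "\<alpha> ` P' \<subseteq> P" using primeideal_subset_carrier[OF P] by (metis image_alpha_beta image_mono)
  then have "\<alpha> ` P' = P" using Pmin primeideal_image_alpha P' by blast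
  then show "P' = \<beta> ` P" using P' primeideal_subset_carrier by force
qed

lemma image_pow_Suc: "(\<alpha> ^^ Suc i) ` X = \<alpha> ` (\<alpha> ^^ i) ` X"
  by (simp add: image_comp)

lemma image_pow_add: "(\<alpha> ^^ (i + j)) ` X = (\<alpha> ^^ i) ` (\<alpha> ^^ j) ` X"
  by (simp add: image_comp funpow_add)

lemma minimal_prime_image_pow: "minimal_prime R P \<Longrightarrow> minimal_prime R ((\<alpha> ^^ i) ` P)"
  by (induction i) (simp_all add: image_pow_Suc minimal_prime_image_alpha del: funpow.simps)


lemma alpha_stableI:
  assumes "X \<subseteq> carrier R" "\<And>x. x \<in> X \<Longrightarrow> \<alpha> x \<in> X" "\<And>x. x \<in> X \<Longrightarrow> \<beta> x \<in> X"
  shows "\<alpha> ` X = X"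
proof (intro equalityI subsetI)
  fix y assume "y \<in> X"
  then have "y = \<alpha> (\<beta> y)" "\<beta> y \<in> X" using assms(1,3) by auto
  then show "y \<in> \<alpha> ` X" by blast
qed (use assms(2) in blast)

lemma beta_mem_alpha_stable: "\<alpha> ` X = X \<Longrightarrow> X \<subseteq> carrier R \<Longrightarrow> x \<in> X \<Longrightarrow> \<beta> x \<in> X"
  by (metis image_beta_alpha imageI)

lemma Inter_alpha_stable:
  assumes "\<And>X. X \<in> \<G> \<Longrightarrow> X \<subseteq> carrier R"
    and "\<And>X. X \<in> \<G> \<Longrightarrow> \<alpha> ` X \<in> \<G>" and "\<And>X. X \<in> \<G> \<Longrightarrow> \<beta> ` X \<in> \<G>"
  shows "\<alpha> ` (carrier R \<inter> \<Inter>\<G>) = carrier R \<inter> \<Inter>\<G>"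
proof (rule alpha_stableI)
  fix x assume x: "x \<in> carrier R \<inter> \<Inter>\<G>"
  have "\<alpha> x \<in> X" if "X \<in> \<G>" for X
    using x assms(1,3)[OF that] image_alpha_beta[OF assms(1)[OF that]] by blast
  then show "\<alpha> x \<in> carrier R \<inter> \<Inter>\<G>" using x by simp
  have "\<beta> x \<in> X" if "X \<in> \<G>" for X
    using x assms(1,2)[OF that] image_beta_alpha[OF assms(1)[OF that]] by blast
  then show "\<beta> x \<in> carrier R \<inter> \<Inter>\<G>" using x by simp
qed blast

lemma annihilator_alpha_stable:
  assumes N: "N \<subseteq> carrier R" and Ns: "\<alpha> ` N = N"
  shows "\<alpha> ` annihilator N = annihilator N"
proof (rule alpha_stableI)
  fix r assume r: "r \<in> annihilator N"
  then have rc: "r \<in> carrier R" by (simp add: annihilator_def)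
  have "\<alpha> r \<otimes> y = \<zero>" if y: "y \<in> N" for y
  proof -
    have yc: "y \<in> carrier R" using y N by blast
    have "\<alpha> r \<otimes> y = \<alpha> (r \<otimes> \<beta> y)" using yc rc ring_hom_mult[OF alpha_hom] by simp
    also have "r \<otimes> \<beta> y = \<zero>" using r beta_mem_alpha_stable[OF Ns N y] by (simp add: annihilator_def)
    finally show ?thesis using ring_hom_zero[OF alpha_hom ring_axioms ring_axioms] by simp
  qed
  then show "\<alpha> r \<in> annihilator N" using rc by (simp add: annihilator_def)
  have "\<beta> r \<otimes> y = \<zero>" if y: "y \<in> N" for y
  proof -
    have yc: "y \<in> carrier R" using y N by blast
    have "\<beta> r \<otimes> y = \<beta> (r \<otimes> \<alpha> y)" using yc rc ring_hom_mult[OF beta_hom] by simp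
    also have "r \<otimes> \<alpha> y = \<zero>" using r Ns y by (auto simp: annihilator_def)
    finally show ?thesis using ring_hom_zero[OF beta_hom ring_axioms ring_axioms] by simp
  qed
  then show "\<beta> r \<in> annihilator N" using rc by (simp add: annihilator_def)
qed (simp add: annihilator_def)

lemma alpha_stable_nilpotent_ideal_eq_zero:
  assumes ap: "alpha_prime_ring R \<alpha>" and one: "\<one> \<noteq> \<zero>"
    and N: "ideal N R" and Ns: "\<alpha> ` N = N"
    and nil: "\<And>xs. length xs = k \<Longrightarrow> set xs \<subseteq> N \<Longrightarrow> foldr (\<otimes>) xs \<one> = \<zero>"
  shows "N = {\<zero>}"
proof -
  have Nc: "N \<subseteq> carrier R" using ideal.Icarr[OF N] by blast
  have "ideal_prod R N (annihilator N) \<subseteq> {\<zero>}"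
  proof
    fix s assume "s \<in> ideal_prod R N (annihilator N)"
    then show "s \<in> {\<zero>}"
    proof (induction s rule: ideal_prod.induct)
      case (prod i j)
      then show ?case using Nc by (auto simp: annihilator_def m_comm subset_iff)
    qed simp
  qed
  then have "N \<subseteq> {\<zero>} \<or> annihilator N \<subseteq> {\<zero>}"
    using ap N annihilator_ideal[OF Nc] Ns annihilator_alpha_stable[OF Nc Ns]
    unfolding alpha_prime_ring_def alpha_prime_ideal_def by blast
  then show ?thesis
    using nilpotent_annihilator_nonzero[OF one Nc nil] additive_subgroup.zero_closed[OF ideal.axioms(1)[OF N]]
    by blast
qed

end

context cring_automorphism
begin

definition orbit :: "'a set \<Rightarrow> nat \<Rightarrow> 'a set set" where
  "orbit Q n = (\<lambda>i. (\<alpha> ^^ i) ` Q) ` {..<n}"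

lemma minimal_prime_period:
  assumes fin: "finite {P. minimal_prime R P}" and Q: "minimal_prime R Q"
  obtains n where "0 < n" "(\<alpha> ^^ n) ` Q = Q" "inj_on (\<lambda>i. (\<alpha> ^^ i) ` Q) {..<n}"
proof -
  define f where "f i = (\<alpha> ^^ i) ` Q" for i
  have Qc: "Q \<subseteq> carrier R" using Q primeideal_subset_carrier unfolding minimal_prime_def by blast
  have fc: "f i \<subseteq> carrier R" for i unfolding f_def using Qc by auto
  have cancel: "f (j - i) = Q" if "f i = f j" "i \<le> j" for i j
  proof -
    have "(\<alpha> ^^ i) ` f (j - i) = (\<alpha> ^^ i) ` Q"
      using image_pow_add[of i "j - i" Q] that unfolding f_def by simp
    then show ?thesis using inj_on_image_eq_iff[OF pow_inj fc Qc] by blast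
  qed
  have "range f \<subseteq> {P. minimal_prime R P}" using minimal_prime_image_pow[OF Q] unfolding f_def by auto
  then have "finite (range f)" using finite_subset fin by blast
  then have "\<not> inj f" using finite_imageD by blast
  then obtain i j where "f i = f j" "i < j" unfolding inj_def by (metis linorder_neqE_nat)
  then have "\<exists>d. 0 < d \<and> f d = Q" using cancel by (intro exI[of _ "j - i"]) auto
  define n where "n = (LEAST d. 0 < d \<and> f d = Q)"
  have n: "0 < n" "f n = Q" using LeastI_ex[OF \<open>\<exists>d. 0 < d \<and> f d = Q\<close>] unfolding n_def by blast+
  have "inj_on f {..<n}"
  proof (rule inj_onI)
    have small: "\<not> (0 < d \<and> f d = Q)" if "d < n" for d
      using not_less_Least[OF that[unfolded n_def]] unfolding n_def by blast
    fix a b assume ab: "a \<in> {..<n}" "b \<in> {..<n}" "f a = f b"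
    then have "b - a < n" "a - b < n" by auto
    then show "a = b" using ab(3) cancel[of a b] cancel[of b a] small[of "b - a"] small[of "a - b"]
      by (cases a b rule: linorder_cases) auto
  qed
  then show thesis using that n unfolding f_def by blast
qed

lemma image_pow_period:
  assumes "(\<alpha> ^^ n) ` Q = Q"
  shows "(\<alpha> ^^ (i + m * n)) ` Q = (\<alpha> ^^ i) ` Q"
proof (induction m)
  case (Suc m)
  have "(\<alpha> ^^ (i + Suc m * n)) ` Q = (\<alpha> ^^ (i + m * n)) ` (\<alpha> ^^ n) ` Q"
    by (simp add: image_pow_add[symmetric] algebra_simps)
  then show ?case using Suc assms by simp
qed simp

lemma image_pow_mod:
  assumes "(\<alpha> ^^ n) ` Q = Q"
  shows "(\<alpha> ^^ i) ` Q = (\<alpha> ^^ (i mod n)) ` Q"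
  using image_pow_period[OF assms, of "i mod n" "i div n"] by simp

lemma orbit_closed:
  assumes n: "0 < n" "(\<alpha> ^^ n) ` Q = Q" and Qc: "Q \<subseteq> carrier R" and X: "X \<in> orbit Q n"
  shows "\<alpha> ` X \<in> orbit Q n" and "\<beta> ` X \<in> orbit Q n"
proof -
  have mem: "(\<alpha> ^^ i) ` Q \<in> orbit Q n" for i
    unfolding orbit_def using image_pow_mod[OF n(2), of i] n(1) by simp
  obtain i where i: "X = (\<alpha> ^^ i) ` Q" using X unfolding orbit_def by blast
  show "\<alpha> ` X \<in> orbit Q n" using mem[of "Suc i"] unfolding i image_pow_Suc .
  have "X = \<alpha> ` (\<alpha> ^^ (i + n - 1)) ` Q"
    using image_pow_period[OF n(2), of i 1] n(1) unfolding i image_pow_Suc[symmetric] by simp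
  moreover have "(\<alpha> ^^ (i + n - 1)) ` Q \<subseteq> carrier R" using Qc by auto
  ultimately have "\<beta> ` X = (\<alpha> ^^ (i + n - 1)) ` Q" by simp
  then show "\<beta> ` X \<in> orbit Q n" using mem by simp
qed

text \<open>If the minimal primes have zero intersection, the intersections of an \<open>\<alpha>\<close>-stable family of
  them and of its complement multiply to zero; \<open>\<alpha>\<close>-primeness then leaves no room for the complement.\<close>

lemma alpha_closed_family_eq_minimal_primes:
  assumes ap: "alpha_prime_ring R \<alpha>" and fin: "finite {P. minimal_prime R P}"
    and zero: "\<Inter>{P. minimal_prime R P} = {\<zero>}"
    and sub: "\<O> \<subseteq> {P. minimal_prime R P}" and ne: "\<O> \<noteq> {}"
    and clo: "\<And>X. X \<in> \<O> \<Longrightarrow> \<alpha> ` X \<in> \<O>" "\<And>X. X \<in> \<O> \<Longrightarrow> \<beta> ` X \<in> \<O>"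
  shows "\<O> = {P. minimal_prime R P}"
proof (rule ccontr)
  define MP where "MP = {P. minimal_prime R P}"
  assume "\<O> \<noteq> {P. minimal_prime R P}"
  then have rest: "MP - \<O> \<noteq> {}" using sub unfolding MP_def by blast
  have OMP: "X \<in> \<O> \<Longrightarrow> X \<in> MP" for X using sub unfolding MP_def by blast
  have prime: "primeideal X R" if "X \<in> MP" for X using that unfolding MP_def minimal_prime_def by blast
  have ideal: "ideal X R" if "X \<in> MP" for X using prime[OF that] by (simp add: primeideal_def)
  have carr: "X \<subseteq> carrier R" if "X \<in> MP" for X using primeideal_subset_carrier prime that by blast
  have zero_in: "\<zero> \<in> X" if "X \<in> MP" for X
    using additive_subgroup.zero_closed[OF ideal.axioms(1)[OF ideal[OF that]]] .
  have minimal: "P' = X" if "X \<in> MP" "primeideal P' R" "P' \<subseteq> X" for X P'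
    using that unfolding MP_def minimal_prime_def by blast
  have MPa: "\<alpha> ` X \<in> MP" and MPb: "\<beta> ` X \<in> MP" if "X \<in> MP" for X
    using that minimal_prime_image_alpha minimal_prime_image_beta unfolding MP_def by blast+
  define A where "A = carrier R \<inter> \<Inter>\<O>"
  define B where "B = carrier R \<inter> \<Inter>(MP - \<O>)"
  have A: "ideal A R" "\<alpha> ` A = A"
  proof -
    have "A = \<Inter>\<O>" unfolding A_def using ne carr OMP by blast
    then show "ideal A R" using ne ideal OMP by (auto intro!: i_Intersect)
    show "\<alpha> ` A = A" unfolding A_def using carr OMP clo by (intro Inter_alpha_stable) auto
  qed
  have B: "ideal B R" "\<alpha> ` B = B"
  proof -
    have "B = \<Inter>(MP - \<O>)" unfolding B_def using rest carr by blast
    then show "ideal B R" using rest ideal by (auto intro!: i_Intersect)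
    have "\<alpha> ` X \<in> MP - \<O>" "\<beta> ` X \<in> MP - \<O>" if X: "X \<in> MP - \<O>" for X
    proof -
      have "\<beta> ` \<alpha> ` X = X" "\<alpha> ` \<beta> ` X = X" using carr X by simp_all
      then show "\<alpha> ` X \<in> MP - \<O>" "\<beta> ` X \<in> MP - \<O>" using X MPa MPb clo by (metis DiffD1 DiffD2 DiffI)+
    qed
    then show "\<alpha> ` B = B" unfolding B_def using carr by (intro Inter_alpha_stable) auto
  qed
  have "ideal_prod R A B \<subseteq> {\<zero>}"
  proof
    fix s assume "s \<in> ideal_prod R A B"
    then show "s \<in> {\<zero>}"
    proof (induction s rule: ideal_prod.induct)
      case (prod a b)
      have ab: "a \<in> carrier R" "b \<in> carrier R" using prod unfolding A_def B_def by blast+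
      have "a \<otimes> b \<in> X" if X: "X \<in> MP" for X
      proof (cases "X \<in> \<O>")
        case True
        then have "a \<in> X" using prod(1) unfolding A_def by blast
        then show ?thesis using ideal.I_r_closed[OF ideal[OF X] _ ab(2)] by blast
      next
        case False
        then have "b \<in> X" using prod(2) X unfolding B_def by blast
        then show ?thesis using ideal.I_l_closed[OF ideal[OF X] _ ab(1)] by blast
      qed
      then show ?case using zero unfolding MP_def by blast
    qed simp
  qed
  then have "A \<subseteq> {\<zero>} \<or> B \<subseteq> {\<zero>}"
    using ap A B unfolding alpha_prime_ring_def alpha_prime_ideal_def by blast
  then show False
  proof
    assume A0: "A \<subseteq> {\<zero>}"
    obtain P where P: "P \<in> MP" "P \<notin> \<O>" using rest by blast
    have "\<Inter>\<O> \<subseteq> P"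
    proof
      fix x assume "x \<in> \<Inter>\<O>"
      moreover have "x \<in> carrier R" using \<open>x \<in> \<Inter>\<O>\<close> ne carr OMP by blast
      ultimately show "x \<in> P" using A0 zero_in[OF P(1)] unfolding A_def by blast
    qed
    then obtain X where "X \<in> \<O>" "X \<subseteq> P"
      using primeideal_contains_Inter[OF finite_subset[OF sub fin] ne _ prime[OF P(1)]] ideal OMP
      by blast
    then show False using minimal[OF P(1)] prime OMP P(2) by blast
  next
    assume B0: "B \<subseteq> {\<zero>}"
    obtain Q where Q: "Q \<in> \<O>" using ne by blast
    have "\<Inter>(MP - \<O>) \<subseteq> Q"
    proof
      fix x assume "x \<in> \<Inter>(MP - \<O>)"
      moreover have "x \<in> carrier R" using \<open>x \<in> \<Inter>(MP - \<O>)\<close> rest carr by blast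
      ultimately show "x \<in> Q" using B0 zero_in[OF OMP[OF Q]] unfolding B_def by blast
    qed
    then obtain X where "X \<in> MP - \<O>" "X \<subseteq> Q"
      using primeideal_contains_Inter[OF _ rest _ prime[OF OMP[OF Q]]] fin ideal unfolding MP_def
      by blast
    then show False using minimal[OF OMP[OF Q]] prime Q by blast
  qed
qed


lemma Inter_minimal_primes_eq_zero:
  assumes "noetherian_ring R" and ap: "alpha_prime_ring R \<alpha>" and one: "\<one> \<noteq> \<zero>"
  shows "finite {P. minimal_prime R P}" and "{P. minimal_prime R P} \<noteq> {}"
    and "\<Inter>{P. minimal_prime R P} = {\<zero>}"
proof -
  have noeth: "noetherian_cring R" by (rule noetherian_cring.intro[OF is_cring assms(1)])
  define MP where "MP = {P. minimal_prime R P}"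
  define N where "N = carrier R \<inter> \<Inter>MP"
  show "finite {P. minimal_prime R P}"
    by (rule noetherian_cring.minimal_primes_finite_nilpotent(1)[OF noeth])
  obtain k where nil: "\<And>xs. length xs = k \<Longrightarrow> set xs \<subseteq> N \<Longrightarrow> foldr (\<otimes>) xs \<one> = \<zero>"
    using noetherian_cring.minimal_primes_finite_nilpotent(2)[OF noeth] unfolding N_def MP_def by blast
  have "foldr (\<otimes>) (replicate k \<one>) \<one> = \<one>" by (induction k) auto
  then have "\<not> set (replicate k \<one>) \<subseteq> N" using nil[of "replicate k \<one>"] one by auto
  then show ne: "{P. minimal_prime R P} \<noteq> {}" unfolding N_def MP_def by auto
  have MP: "primeideal X R" "ideal X R" "X \<subseteq> carrier R" if "X \<in> MP" for X
  proof -
    show "primeideal X R" using that unfolding MP_def minimal_prime_def by blast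
    then show "ideal X R" "X \<subseteq> carrier R" by (simp_all add: primeideal_def primeideal_subset_carrier)
  qed
  have "N = \<Inter>MP" unfolding N_def using ne MP(3) unfolding MP_def by blast
  then have "ideal N R" using ne MP(2) unfolding MP_def by (auto intro!: i_Intersect)
  moreover have "\<alpha> ` N = N"
    unfolding N_def using MP(3) minimal_prime_image_alpha minimal_prime_image_beta unfolding MP_def
    by (intro Inter_alpha_stable) auto
  ultimately have "N = {\<zero>}" using alpha_stable_nilpotent_ideal_eq_zero[OF ap one] nil by blast
  then show "\<Inter>{P. minimal_prime R P} = {\<zero>}" using \<open>N = \<Inter>MP\<close> unfolding MP_def by simp
qed

lemma minimal_primes_single_orbit:
  assumes "noetherian_ring R" and ap: "alpha_prime_ring R \<alpha>" and one: "\<one> \<noteq> \<zero>"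
  shows "\<exists>n Q. 0 < n \<and> primeideal Q R \<and> inj_on (\<lambda>i. (\<alpha> ^^ i) ` Q) {..<n} \<and>
           {P. minimal_prime R P} = orbit Q n \<and> (\<alpha> ^^ n) ` Q = Q \<and>
           (\<Inter>i\<in>{..<n}. (\<alpha> ^^ i) ` Q) = {\<zero>}"
proof -
  note MP = Inter_minimal_primes_eq_zero[OF assms]
  obtain Q where Q: "minimal_prime R Q" using MP(2) by blast
  then have Qc: "Q \<subseteq> carrier R" and Qp: "primeideal Q R"
    using primeideal_subset_carrier unfolding minimal_prime_def by blast+
  obtain n where n: "0 < n" "(\<alpha> ^^ n) ` Q = Q" "inj_on (\<lambda>i. (\<alpha> ^^ i) ` Q) {..<n}"
    using minimal_prime_period[OF MP(1) Q] by blast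
  have "orbit Q n = {P. minimal_prime R P}"
  proof (rule alpha_closed_family_eq_minimal_primes[OF ap MP(1,3)])
    show "orbit Q n \<subseteq> {P. minimal_prime R P}"
      unfolding orbit_def using minimal_prime_image_pow[OF Q] by blast
    show "orbit Q n \<noteq> {}" unfolding orbit_def using n(1) by blast
  qed (use orbit_closed[OF n(1,2) Qc] in blast)+
  moreover have "(\<Inter>i\<in>{..<n}. (\<alpha> ^^ i) ` Q) = \<Inter>(orbit Q n)" unfolding orbit_def by simp
  ultimately show ?thesis using n Qp MP(3) by auto
qed

end

locale skew_poly_ring = cring_automorphism +
  assumes skew_ring: "ring (skew_poly R \<alpha>)"
begin

abbreviation S where "S \<equiv> skew_poly R \<alpha>"

sublocale S: ring S by (rule skew_ring)

lemma S_carrier: "f \<in> carrier S \<longleftrightarrow> (\<forall>i. f i \<in> carrier R) \<and> finite {i. f i \<noteq> \<zero>}"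
  by (simp add: skew_poly_def)

lemma S_mult: "(f \<otimes>\<^bsub>S\<^esub> g) k = (\<Oplus>i \<in> {..k}. f i \<otimes> (\<alpha> ^^ i) (g (k - i)))"
  by (simp add: skew_poly_def)

lemma S_add: "(f \<oplus>\<^bsub>S\<^esub> g) k = f k \<oplus> g k"
  by (simp add: skew_poly_def)

lemma S_zero: "\<zero>\<^bsub>S\<^esub> = (\<lambda>k. \<zero>)"
  by (simp add: skew_poly_def)

lemma S_one: "\<one>\<^bsub>S\<^esub> = (\<lambda>k. if k = 0 then \<one> else \<zero>)"
  by (simp add: skew_poly_def)

lemma S_coeff: "f \<in> carrier S \<Longrightarrow> f i \<in> carrier R"
  by (simp add: S_carrier)

lemma S_carrierI:
  assumes "\<And>i. f i \<in> carrier R" and "\<And>i. f i \<noteq> \<zero> \<Longrightarrow> g i \<noteq> \<zero>" and "g \<in> carrier S"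
  shows "f \<in> carrier S"
  using assms finite_subset[of "{i. f i \<noteq> \<zero>}" "{i. g i \<noteq> \<zero>}"] by (auto simp: S_carrier)

lemma S_minus: assumes "f \<in> carrier S" shows "\<ominus>\<^bsub>S\<^esub> f = (\<lambda>k. \<ominus> f k)"
proof (rule S.minus_equality)
  show "(\<lambda>k. \<ominus> f k) \<in> carrier S" by (rule S_carrierI[of _ f]) (use assms in \<open>auto simp: S_coeff\<close>)
  show "(\<lambda>k. \<ominus> f k) \<oplus>\<^bsub>S\<^esub> f = \<zero>\<^bsub>S\<^esub>" using assms by (auto simp: S_add S_zero S_coeff l_neg)
qed (rule assms)

lemma one_ne_zero_if_prime_skew_poly:
  assumes "prime_ring S"
  shows "\<one> \<noteq> \<zero>"
proof
  assume one: "\<one> = \<zero>"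
  have "f = \<zero>\<^bsub>S\<^esub>" if "f \<in> carrier S" for f
  proof
    fix k
    have "f k = f k \<otimes> \<one>" using S_coeff[OF that] by simp
    then show "f k = \<zero>\<^bsub>S\<^esub> k" using S_coeff[OF that] one by (simp add: S_zero)
  qed
  then show False using assms S.zero_closed unfolding prime_ring_def by blast
qed

definition const_poly :: "'a \<Rightarrow> nat \<Rightarrow> 'a" where
  "const_poly r = (\<lambda>k. if k = 0 then r else \<zero>)"

lemma const_poly_carrier: "r \<in> carrier R \<Longrightarrow> const_poly r \<in> carrier S"
  unfolding S_carrier const_poly_def by (auto intro: finite_subset[of _ "{0}"])

lemma const_poly_mult_left:
  assumes a: "a \<in> carrier R" and g: "\<And>i. g i \<in> carrier R"
  shows "(const_poly a \<otimes>\<^bsub>S\<^esub> g) k = a \<otimes> g k"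
proof -
  have "(const_poly a \<otimes>\<^bsub>S\<^esub> g) k = (\<Oplus>i \<in> {..k}. if 0 = i then a \<otimes> g k else \<zero>)"
    unfolding S_mult by (rule finsum_cong') (auto simp: const_poly_def a g)
  also have "\<dots> = a \<otimes> g k"
    using finsum_singleton[of 0 "{..k}" "\<lambda>i. a \<otimes> g k"] a g by auto
  finally show ?thesis .
qed

lemma const_poly_mult_right:
  assumes a: "a \<in> carrier R" and g: "\<And>i. g i \<in> carrier R"
  shows "(g \<otimes>\<^bsub>S\<^esub> const_poly a) k = g k \<otimes> (\<alpha> ^^ k) a"
proof -
  have "(g \<otimes>\<^bsub>S\<^esub> const_poly a) k = (\<Oplus>i \<in> {..k}. if k = i then g i \<otimes> (\<alpha> ^^ i) a else \<zero>)"
    unfolding S_mult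
  proof (rule finsum_cong'[OF refl])
    fix i assume "i \<in> {..k}"
    then show "g i \<otimes> (\<alpha> ^^ i) (const_poly a (k - i)) = (if k = i then g i \<otimes> (\<alpha> ^^ i) a else \<zero>)"
      using g by (auto simp: const_poly_def)
  qed (use a g in simp)
  also have "\<dots> = g k \<otimes> (\<alpha> ^^ k) a"
    by (rule finsum_singleton[of k "{..k}" "\<lambda>i. g i \<otimes> (\<alpha> ^^ i) a"]) (use a g in auto)
  finally show ?thesis .
qed

lemma pow_mem_alpha_stable: "\<alpha> ` I = I \<Longrightarrow> x \<in> I \<Longrightarrow> (\<alpha> ^^ i) x \<in> I"
  by (induction i) auto

definition coeff_ideal :: "'a set \<Rightarrow> (nat \<Rightarrow> 'a) set" where
  "coeff_ideal I = {f \<in> carrier S. \<forall>i. f i \<in> I}"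

lemma coeff_ideal_ideal:
  assumes I: "ideal I R" and st: "\<alpha> ` I = I"
  shows "ideal (coeff_ideal I) S"
proof -
  interpret I: ideal I R by (rule I)
  show ?thesis
  proof (rule idealI[OF skew_ring])
    show "subgroup (coeff_ideal I) (add_monoid S)"
    proof
      fix x y assume "x \<in> coeff_ideal I" "y \<in> coeff_ideal I"
      then show "x \<otimes>\<^bsub>add_monoid S\<^esub> y \<in> coeff_ideal I"
        by (auto simp: coeff_ideal_def S_add I.a_closed)
    next
      fix x assume x: "x \<in> coeff_ideal I"
      then have "\<ominus>\<^bsub>S\<^esub> x \<in> carrier S" by (simp add: coeff_ideal_def)
      then have "\<ominus>\<^bsub>S\<^esub> x \<in> coeff_ideal I" using x by (auto simp: coeff_ideal_def S_minus I.a_inv_closed)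
      then show "inv\<^bsub>add_monoid S\<^esub> x \<in> coeff_ideal I" by (simp add: a_inv_def)
    qed (use S.zero_closed in \<open>auto simp: coeff_ideal_def S_zero I.zero_closed\<close>)
  next
    fix a x assume a: "a \<in> coeff_ideal I" and x: "x \<in> carrier S"
    have "(x \<otimes>\<^bsub>S\<^esub> a) k \<in> I" for k
      unfolding S_mult using a x st
      by (intro finsum_in_ideal[OF I]) (auto simp: coeff_ideal_def S_coeff I.I_l_closed pow_mem_alpha_stable)
    then show "x \<otimes>\<^bsub>S\<^esub> a \<in> coeff_ideal I" using a x by (simp add: coeff_ideal_def)
    have "(a \<otimes>\<^bsub>S\<^esub> x) k \<in> I" for k
      unfolding S_mult using a x by (intro finsum_in_ideal[OF I]) (auto simp: coeff_ideal_def S_coeff I.I_r_closed)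
    then show "a \<otimes>\<^bsub>S\<^esub> x \<in> coeff_ideal I" using a x by (simp add: coeff_ideal_def)
  qed
qed

lemma coeff_ideal_zero_imp_zero: "ideal I R \<Longrightarrow> coeff_ideal I \<subseteq> {\<zero>\<^bsub>S\<^esub>} \<Longrightarrow> I \<subseteq> {\<zero>}"
proof
  fix x assume I: "ideal I R" and e: "coeff_ideal I \<subseteq> {\<zero>\<^bsub>S\<^esub>}" and x: "x \<in> I"
  have "const_poly x \<in> coeff_ideal I"
    using const_poly_carrier[OF ideal.Icarr[OF I x]] x additive_subgroup.zero_closed[OF ideal.axioms(1)[OF I]]
    by (auto simp: coeff_ideal_def const_poly_def)
  then have "const_poly x 0 = \<zero>" using e by (auto simp: S_zero)
  then show "x \<in> {\<zero>}" by (simp add: const_poly_def)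
qed

text \<open>The product of two coefficient ideals consists of polynomials with coefficients in \<open>IJ\<close>.\<close>

lemma alpha_prime_if_prime_skew_poly:
  assumes P: "prime_ring S"
  shows "alpha_prime_ring R \<alpha>"
  unfolding alpha_prime_ring_def alpha_prime_ideal_def
proof (intro conjI allI impI)
  show "ideal {\<zero>} R" by (rule zeroideal)
  show "\<alpha> ` {\<zero>} = {\<zero>}" using pow_zero[of 1] by simp
  fix I J assume "ideal I R \<and> ideal J R \<and> \<alpha> ` I = I \<and> \<alpha> ` J = J \<and> ideal_prod R I J \<subseteq> {\<zero>}"
  then have I: "ideal I R" and J: "ideal J R" and sI: "\<alpha> ` I = I" and sJ: "\<alpha> ` J = J"
    and IJ: "ideal_prod R I J \<subseteq> {\<zero>}" by auto
  have "ideal_prod S (coeff_ideal I) (coeff_ideal J) \<subseteq> {\<zero>\<^bsub>S\<^esub>}"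
  proof
    fix s assume "s \<in> ideal_prod S (coeff_ideal I) (coeff_ideal J)"
    then show "s \<in> {\<zero>\<^bsub>S\<^esub>}"
    proof (induction s rule: ideal_prod.induct)
      case (prod f g)
      have "(f \<otimes>\<^bsub>S\<^esub> g) k = (\<Oplus>i \<in> {..k}. \<zero>)" for k
        unfolding S_mult
      proof (rule finsum_cong'[OF refl])
        fix i
        have "f i \<otimes> (\<alpha> ^^ i) (g (k - i)) \<in> ideal_prod R I J"
          using prod pow_mem_alpha_stable[OF sJ] by (intro ideal_prod.prod) (auto simp: coeff_ideal_def)
        then show "f i \<otimes> (\<alpha> ^^ i) (g (k - i)) = \<zero>" using IJ by blast
      qed simp
      then show ?case by (simp add: S_zero fun_eq_iff)
    qed simp
  qed
  then have "coeff_ideal I \<subseteq> {\<zero>\<^bsub>S\<^esub>} \<or> coeff_ideal J \<subseteq> {\<zero>\<^bsub>S\<^esub>}"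
    using P coeff_ideal_ideal[OF I sI] coeff_ideal_ideal[OF J sJ] unfolding prime_ring_def by blast
  then show "I \<subseteq> {\<zero>} \<or> J \<subseteq> {\<zero>}" using coeff_ideal_zero_imp_zero[OF I] coeff_ideal_zero_imp_zero[OF J] by blast
qed

end

locale rmod =
  fixes T :: "('c, 'b) ring_scheme" (structure) and M :: "'m set"
    and madd :: "'m \<Rightarrow> 'm \<Rightarrow> 'm" and mzero :: 'm and act :: "'m \<Rightarrow> 'c \<Rightarrow> 'm"
  assumes right_module: "right_module T M madd mzero act"
begin

abbreviation G where "G \<equiv> \<lparr>carrier = M, mult = madd, one = mzero\<rparr>"

sublocale T: ring T using right_module unfolding right_module_def by blast
sublocale G: comm_group G using right_module unfolding right_module_def by blast

lemma madd_closed[simp]: "x \<in> M \<Longrightarrow> y \<in> M \<Longrightarrow> madd x y \<in> M"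
  using G.m_closed[of x y] by simp

lemma mzero_closed[simp]: "mzero \<in> M"
  using G.one_closed by simp

lemma madd_assoc: "x \<in> M \<Longrightarrow> y \<in> M \<Longrightarrow> z \<in> M \<Longrightarrow> madd (madd x y) z = madd x (madd y z)"
  using G.m_assoc[of x y z] by simp

lemma madd_comm: "x \<in> M \<Longrightarrow> y \<in> M \<Longrightarrow> madd x y = madd y x"
  using G.m_comm[of x y] by simp

lemma madd_zero_left[simp]: "x \<in> M \<Longrightarrow> madd mzero x = x"
  using G.l_one[of x] by simp

lemma madd_zero_right[simp]: "x \<in> M \<Longrightarrow> madd x mzero = x"
  using G.r_one[of x] by simp

lemma act_closed[simp]: "m \<in> M \<Longrightarrow> r \<in> carrier T \<Longrightarrow> act m r \<in> M"
  using right_module unfolding right_module_def by blast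

lemma act_add_right:
  "m \<in> M \<Longrightarrow> r \<in> carrier T \<Longrightarrow> s \<in> carrier T \<Longrightarrow> act m (r \<oplus> s) = madd (act m r) (act m s)"
  using right_module unfolding right_module_def by blast

lemma act_add_left:
  "m \<in> M \<Longrightarrow> m' \<in> M \<Longrightarrow> r \<in> carrier T \<Longrightarrow> act (madd m m') r = madd (act m r) (act m' r)"
  using right_module unfolding right_module_def by blast

lemma act_mult: "m \<in> M \<Longrightarrow> r \<in> carrier T \<Longrightarrow> s \<in> carrier T \<Longrightarrow> act m (r \<otimes> s) = act (act m r) s"
  using right_module unfolding right_module_def by blast

lemma act_one[simp]: "m \<in> M \<Longrightarrow> act m \<one> = m"
  using right_module unfolding right_module_def by blast

lemma act_zero_right[simp]:
  assumes "m \<in> M"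
  shows "act m \<zero> = mzero"
proof -
  have "madd (act m \<zero>) (act m \<zero>) = act m \<zero>" using act_add_right[OF assms, of \<zero> \<zero>] by simp
  then show ?thesis using G.l_cancel_one[of "act m \<zero>" "act m \<zero>"] assms by simp
qed

lemma act_zero_left[simp]:
  assumes "r \<in> carrier T"
  shows "act mzero r = mzero"
proof -
  have "madd (act mzero r) (act mzero r) = act mzero r" using act_add_left[of mzero mzero r] assms by simp
  then show ?thesis using G.l_cancel_one[of "act mzero r" "act mzero r"] assms by simp
qed

lemma act_minus:
  assumes m: "m \<in> M" and r: "r \<in> carrier T"
  shows "act m (\<ominus> r) = inv\<^bsub>G\<^esub> (act m r)"
proof (rule G.inv_equality[symmetric])
  have "madd (act m (\<ominus> r)) (act m r) = act m (\<ominus> r \<oplus> r)" using act_add_right[OF m] r by simp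
  also have "\<dots> = mzero" using m r by (simp add: T.l_neg)
  finally show "act m (\<ominus> r) \<otimes>\<^bsub>G\<^esub> act m r = \<one>\<^bsub>G\<^esub>" by simp
qed (use m r in simp_all)

lemma cyclic_submodule:
  assumes x: "x \<in> M"
  shows "submodule T {act x r | r. r \<in> carrier T} M madd mzero act"
  unfolding submodule_def
proof (intro conjI ballI)
  show "subgroup {act x r | r. r \<in> carrier T} G"
  proof
    show "\<one>\<^bsub>G\<^esub> \<in> {act x r | r. r \<in> carrier T}"
      using x act_zero_right[OF x] by (auto intro!: exI[of _ \<zero>])
  next
    fix a b assume "a \<in> {act x r | r. r \<in> carrier T}" "b \<in> {act x r | r. r \<in> carrier T}"
    then obtain r s where "r \<in> carrier T" "s \<in> carrier T" "a = act x r" "b = act x s" by blast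
    then show "a \<otimes>\<^bsub>G\<^esub> b \<in> {act x r | r. r \<in> carrier T}"
      using act_add_right[OF x] by (auto intro!: exI[of _ "r \<oplus> s"])
  next
    fix a assume "a \<in> {act x r | r. r \<in> carrier T}"
    then obtain r where "r \<in> carrier T" "a = act x r" by blast
    then show "inv\<^bsub>G\<^esub> a \<in> {act x r | r. r \<in> carrier T}"
      using act_minus[OF x] by (auto intro!: exI[of _ "\<ominus> r"])
  qed (use x in auto)
next
  fix m r assume "m \<in> {act x r | r. r \<in> carrier T}" and r: "r \<in> carrier T"
  then obtain s where "s \<in> carrier T" "m = act x s" by blast
  then show "act m r \<in> {act x r | r. r \<in> carrier T}"
    using act_mult[OF x] r by (auto intro!: exI[of _ "s \<otimes> r"])
qed

lemma simple_cyclic: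
  assumes "simple_right_module T M madd mzero act" and x: "x \<in> M" "x \<noteq> mzero" and "y \<in> M"
  shows "\<exists>r\<in>carrier T. y = act x r"
proof -
  have "x \<in> {act x r | r. r \<in> carrier T}" using x by (auto intro!: exI[of _ \<one>])
  then have "{act x r | r. r \<in> carrier T} = M"
    using assms(1) cyclic_submodule[OF x(1)] x(2) unfolding simple_right_module_def by blast
  then show ?thesis using assms(4) by blast
qed

end


locale rmod_transport = rmod T M madd mzero act
  for T :: "('c, 'b) ring_scheme" (structure) and M :: "'m set" and madd mzero act +
  fixes h :: "'m \<Rightarrow> 'n"
  assumes h_inj: "inj_on h M"
begin

definition g :: "'n \<Rightarrow> 'm" where "g = inv_into M h"
definition tadd :: "'n \<Rightarrow> 'n \<Rightarrow> 'n" where "tadd A B = h (madd (g A) (g B))"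
definition tact :: "'n \<Rightarrow> 'c \<Rightarrow> 'n" where "tact A r = h (act (g A) r)"

lemma g_h[simp]: "x \<in> M \<Longrightarrow> g (h x) = x"
  unfolding g_def using h_inj by simp

lemma g_closed[simp]: "A \<in> h ` M \<Longrightarrow> g A \<in> M"
  by auto

lemma h_g[simp]: "A \<in> h ` M \<Longrightarrow> h (g A) = A"
  by auto

lemma transport_comm_group: "comm_group \<lparr>carrier = h ` M, mult = tadd, one = h mzero\<rparr>"
  (is "comm_group ?H")
proof (rule comm_groupI)
  fix x assume x: "x \<in> carrier ?H"
  have i: "inv\<^bsub>G\<^esub> (g x) \<in> M" using G.inv_closed[of "g x"] x by simp
  have "tadd (h (inv\<^bsub>G\<^esub> (g x))) x = h mzero" using G.l_inv[of "g x"] x i by (simp add: tadd_def)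
  then show "\<exists>y\<in>carrier ?H. y \<otimes>\<^bsub>?H\<^esub> x = \<one>\<^bsub>?H\<^esub>" using i by force
qed (auto simp: tadd_def madd_assoc, metis madd_comm)

lemma transport_right_module: "right_module T (h ` M) tadd (h mzero) tact"
  unfolding right_module_def
  using T.ring_axioms transport_comm_group
  by (auto simp: tadd_def tact_def act_add_right act_add_left act_mult)

lemma transport_submodule:
  assumes "submodule T N (h ` M) tadd (h mzero) tact"
  shows "submodule T (g ` N) M madd mzero act"
proof -
  interpret H: rmod T "h ` M" tadd "h mzero" tact by (rule rmod.intro[OF transport_right_module])
  have sg: "subgroup N H.G" and Nact: "\<And>m r. m \<in> N \<Longrightarrow> r \<in> carrier T \<Longrightarrow> tact m r \<in> N"
    using assms unfolding submodule_def by auto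
  have N: "N \<subseteq> h ` M" using subgroup.subset[OF sg] by simp
  have inv: "inv\<^bsub>H.G\<^esub> A = h (inv\<^bsub>G\<^esub> (g A))" if "A \<in> h ` M" for A
  proof (rule H.G.inv_equality)
    show "h (inv\<^bsub>G\<^esub> (g A)) \<otimes>\<^bsub>H.G\<^esub> A = \<one>\<^bsub>H.G\<^esub>" using that G.l_inv[of "g A"] G.inv_closed[of "g A"] by (simp add: tadd_def)
  qed (use that G.inv_closed[of "g A"] in auto)
  show ?thesis
    unfolding submodule_def
  proof (intro conjI ballI)
    show "subgroup (g ` N) G"
    proof
      show "g ` N \<subseteq> carrier G" using N by auto
      show "\<one>\<^bsub>G\<^esub> \<in> g ` N" using subgroup.one_closed[OF sg] by force
    next
      fix a b assume "a \<in> g ` N" "b \<in> g ` N"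
      then obtain A B where AB: "A \<in> N" "B \<in> N" "a = g A" "b = g B" by blast
      moreover have "A \<in> h ` M" "B \<in> h ` M" using AB(1,2) N by auto
      ultimately have "a \<otimes>\<^bsub>G\<^esub> b = g (tadd A B)" by (simp add: tadd_def)
      moreover have "tadd A B \<in> N" using subgroup.m_closed[OF sg AB(1,2)] by simp
      ultimately show "a \<otimes>\<^bsub>G\<^esub> b \<in> g ` N" by simp
    next
      fix a assume "a \<in> g ` N"
      then obtain A where A: "A \<in> N" "a = g A" by blast
      moreover have "A \<in> h ` M" using A(1) N by auto
      ultimately have "inv\<^bsub>G\<^esub> a = g (inv\<^bsub>H.G\<^esub> A)" using inv G.inv_closed[of a] by simp
      moreover have "inv\<^bsub>H.G\<^esub> A \<in> N" using subgroup.m_inv_closed[OF sg A(1)] .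
      ultimately show "inv\<^bsub>G\<^esub> a \<in> g ` N" by simp
    qed
  next
    fix a r assume "a \<in> g ` N" "r \<in> carrier T"
    then obtain A where A: "A \<in> N" "a = g A" by blast
    moreover have "A \<in> h ` M" using A(1) N by auto
    ultimately have "act a r = g (tact A r)" using \<open>r \<in> carrier T\<close> by (simp add: tact_def)
    then show "act a r \<in> g ` N" using Nact[OF A(1) \<open>r \<in> carrier T\<close>] by simp
  qed
qed

lemma transport_simple:
  assumes "simple_right_module T M madd mzero act"
  shows "simple_right_module T (h ` M) tadd (h mzero) tact"
  unfolding simple_right_module_def
proof (intro conjI allI impI)
  show "right_module T (h ` M) tadd (h mzero) tact" by (rule transport_right_module)
  obtain y where "y \<in> M" "y \<noteq> mzero" using assms mzero_closed unfolding simple_right_module_def by blast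
  then show "h ` M \<noteq> {h mzero}" using h_inj mzero_closed by (metis g_h imageI singletonD)
next
  fix N assume N: "submodule T N (h ` M) tadd (h mzero) tact"
  then have "g ` N = {mzero} \<or> g ` N = M"
    using assms transport_submodule unfolding simple_right_module_def by blast
  moreover have "N \<subseteq> h ` M" using N subgroup.subset unfolding submodule_def by force
  then have "h ` g ` N = N" by force
  ultimately show "N = {h mzero} \<or> N = h ` M" by force
qed

lemma transport_faithful:
  assumes "faithful_right_module T M madd mzero act"
  shows "faithful_right_module T (h ` M) tadd (h mzero) tact"
  unfolding faithful_right_module_def
proof (intro conjI ballI impI)
  show "right_module T (h ` M) tadd (h mzero) tact" by (rule transport_right_module)
  fix r assume r: "r \<in> carrier T" and z: "\<forall>A\<in>h ` M. tact A r = h mzero"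
  have "act x r = mzero" if "x \<in> M" for x
    using z that r h_inj inj_onD[OF h_inj] unfolding tact_def by (metis act_closed g_h imageI mzero_closed)
  then show "r = \<zero>\<^bsub>T\<^esub>" using assms r unfolding faithful_right_module_def by blast
qed

end

text \<open>The definition of \<open>primitive\<close> fixes the type of the module elements; a simple module
  over \<open>T\<close> embeds into the subsets of \<open>T\<close> by sending \<open>x\<close> to \<open>{r. m\<^sub>0 r = x}\<close>.\<close>

lemma primitiveI:
  assumes s: "simple_right_module T M madd mzero act"
    and f: "faithful_right_module T M madd mzero act"
  shows "primitive T"
proof -
  interpret rmod T M madd mzero act
    using s unfolding simple_right_module_def by (intro rmod.intro) blast
  obtain m0 where m0: "m0 \<in> M" "m0 \<noteq> mzero"
    using s mzero_closed unfolding simple_right_module_def by blast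
  define h where "h x = {r \<in> carrier T. act m0 r = x}" for x
  have "inj_on h M"
  proof (rule inj_onI)
    fix x y assume "x \<in> M" "y \<in> M" "h x = h y"
    moreover obtain r where "r \<in> carrier T" "x = act m0 r" using simple_cyclic[OF s m0 \<open>x \<in> M\<close>] by blast
    ultimately show "x = y" unfolding h_def by blast
  qed
  then interpret rmod_transport T M madd mzero act h by unfold_locales
  show ?thesis
    unfolding primitive_def using transport_simple[OF s] transport_faithful[OF f] by blast
qed

locale minimal_prime_orbit = skew_poly_ring +
  fixes n :: nat and Q :: "'a set"
  assumes n_pos: "0 < n" and Q_prime: "primeideal Q R"
    and orbit_inj: "inj_on (\<lambda>i. (\<alpha> ^^ i) ` Q) {..<n}"
    and minimal_primes_orbit: "{P. minimal_prime R P} = orbit Q n"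
    and Q_period: "(\<alpha> ^^ n) ` Q = Q"
    and orbit_Inter: "(\<Inter>i\<in>{..<n}. (\<alpha> ^^ i) ` Q) = {\<zero>}"
begin

sublocale Q: ideal Q R using Q_prime by (simp add: primeideal_def)

lemma Q_carrier: "Q \<subseteq> carrier R"
  using primeideal_subset_carrier[OF Q_prime] .

lemma orbit_minimal_prime: "i < n \<Longrightarrow> minimal_prime R ((\<alpha> ^^ i) ` Q)"
  using minimal_primes_orbit unfolding orbit_def by blast

lemma orbit_ideal: "i < n \<Longrightarrow> ideal ((\<alpha> ^^ i) ` Q) R"
  using orbit_minimal_prime unfolding minimal_prime_def primeideal_def by blast

lemma pow_multiple_mem: "q \<in> Q \<Longrightarrow> n dvd k \<Longrightarrow> (\<alpha> ^^ k) q \<in> Q"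
  using image_pow_period[OF Q_period, of 0 "k div n"] by auto

text \<open>An element of all \<open>\<alpha>\<^sup>j(Q)\<close>, \<open>0 < j < n\<close>, but not of \<open>Q\<close>; multiplying by it kills \<open>Q\<close> and
  the coefficients of \<open>\<theta>\<^sup>k\<close> with \<open>n \<nmid> k\<close> modulo \<open>Q\<close>.\<close>

definition rest_ideal :: "'a set" where
  "rest_ideal = {r \<in> carrier R. \<forall>j. 0 < j \<and> j < n \<longrightarrow> r \<in> (\<alpha> ^^ j) ` Q}"

lemma rest_ideal_not_subset: "\<exists>r. r \<in> rest_ideal \<and> r \<notin> Q"
proof (rule ccontr)
  assume "\<nexists>r. r \<in> rest_ideal \<and> r \<notin> Q"
  then have sub: "rest_ideal \<subseteq> Q" by blast
  show False
  proof (cases "n = 1")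
    case True
    then have "rest_ideal = carrier R" unfolding rest_ideal_def by auto
    then show False using sub Q_carrier primeideal.I_notcarr[OF Q_prime] by blast
  next
    case False
    define J where "J = (\<lambda>j. (\<alpha> ^^ j) ` Q) ` {1..<n}"
    have "J \<noteq> {}" "finite J" unfolding J_def using False n_pos by auto
    moreover have "\<Inter>J \<subseteq> rest_ideal"
    proof
      fix x assume x: "x \<in> \<Inter>J"
      moreover have "(\<alpha> ^^ 1) ` Q \<in> J" using False n_pos unfolding J_def by (intro imageI) simp
      ultimately have "x \<in> carrier R" using Q_carrier pow_closed[of _ 1] by blast
      then show "x \<in> rest_ideal" using x unfolding J_def rest_ideal_def by auto
    qed
    moreover have "ideal X R" if "X \<in> J" for X using that orbit_ideal unfolding J_def by auto
    ultimately obtain X where X: "X \<in> J" "X \<subseteq> Q"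
      using primeideal_contains_Inter[OF _ _ _ Q_prime] sub by blast
    then obtain j where j: "j \<in> {1..<n}" "X = (\<alpha> ^^ j) ` Q" unfolding J_def by blast
    have "primeideal X R" using orbit_minimal_prime[of j] j unfolding minimal_prime_def by simp
    moreover have "minimal_prime R Q" using orbit_minimal_prime[of 0] n_pos by simp
    ultimately have "(\<alpha> ^^ j) ` Q = (\<alpha> ^^ 0) ` Q" using X(2) j(2) unfolding minimal_prime_def by simp
    then show False using inj_onD[OF orbit_inj _, of j 0] j n_pos by simp
  qed
qed

lemma rest_ideal_mult_Q: "r \<in> rest_ideal \<Longrightarrow> q \<in> Q \<Longrightarrow> r \<otimes> q = \<zero>"
proof -
  assume r: "r \<in> rest_ideal" and q: "q \<in> Q"
  have "r \<otimes> q \<in> (\<alpha> ^^ i) ` Q" if "i < n" for i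
  proof (cases "i = 0")
    case True
    then show ?thesis using Q.I_l_closed[OF q] r unfolding rest_ideal_def by simp
  next
    case False
    then have "r \<in> (\<alpha> ^^ i) ` Q" using r that unfolding rest_ideal_def by blast
    then show ?thesis using ideal.I_r_closed[OF orbit_ideal[OF that]] q Q_carrier by blast
  qed
  then show "r \<otimes> q = \<zero>" using orbit_Inter by blast
qed

lemma rest_ideal_pow_mem: "r \<in> rest_ideal \<Longrightarrow> \<not> n dvd k \<Longrightarrow> (\<alpha> ^^ k) r \<in> Q"
proof -
  assume r: "r \<in> rest_ideal" and k: "\<not> n dvd k"
  define j where "j = k mod n"
  have j: "0 < j" "j < n" using k n_pos unfolding j_def by (auto simp: dvd_eq_mod_eq_0)
  have "r \<in> (\<alpha> ^^ (n - j)) ` Q" using r j unfolding rest_ideal_def by auto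
  then have "(\<alpha> ^^ k) r \<in> (\<alpha> ^^ (k + (n - j))) ` Q" by (simp add: image_pow_add)
  also have "k + (n - j) = (k div n * n + j) + (n - j)" unfolding j_def by simp
  also have "\<dots> = 0 + (k div n + 1) * n" using j(2) by simp
  finally show ?thesis using image_pow_period[OF Q_period, of 0 "k div n + 1"] by simp
qed


lemma RQ_zero: "\<zero>\<^bsub>R Quot Q\<^esub> = Q"
  by (simp add: FactRing_def)

sublocale RQ: cring "R Quot Q" by (rule Q.quotient_is_cring[OF is_cring])
sublocale H: ring_hom_cring R "R Quot Q" "(+>) Q"
  by (rule ring_hom_cringI[OF is_cring RQ.is_cring Q.rcos_ring_hom])

lemma coset_eq_Q_iff: "a \<in> carrier R \<Longrightarrow> Q +> a = Q \<longleftrightarrow> a \<in> Q"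
  using Q.a_rcos_self Q.a_rcos_const by fastforce

lemma coset_eq_imp_minus_mem:
  assumes a: "a \<in> carrier R" and b: "b \<in> carrier R" and e: "Q +> a = Q +> b"
  shows "a \<ominus> b \<in> Q"
proof -
  obtain q where q: "q \<in> Q" "a = q \<oplus> b"
    using Q.a_rcos_self[OF a] e unfolding a_r_coset_def' by auto
  then have "a \<ominus> b = q" using Q_carrier b by (auto simp: a_minus_def a_assoc r_neg subset_iff)
  then show ?thesis using q(1) by simp
qed

definition bar_alpha :: "'a set \<Rightarrow> 'a set" where "bar_alpha X = (\<alpha> ^^ n) ` X"

abbreviation Sbar where "Sbar \<equiv> skew_poly (R Quot Q) bar_alpha"

lemma bar_alpha_coset:
  assumes x: "x \<in> carrier R"
  shows "bar_alpha (Q +> x) = Q +> (\<alpha> ^^ n) x"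
proof (intro equalityI subsetI)
  fix y assume "y \<in> bar_alpha (Q +> x)"
  then obtain q where q: "q \<in> Q" "y = (\<alpha> ^^ n) (q \<oplus> x)" unfolding bar_alpha_def a_r_coset_def' by blast
  then have "y = (\<alpha> ^^ n) q \<oplus> (\<alpha> ^^ n) x" "(\<alpha> ^^ n) q \<in> Q" using Q_carrier x Q_period by auto
  then show "y \<in> Q +> (\<alpha> ^^ n) x" unfolding a_r_coset_def' by blast
next
  fix y assume "y \<in> Q +> (\<alpha> ^^ n) x"
  then obtain q where q: "q \<in> Q" "y = q \<oplus> (\<alpha> ^^ n) x" unfolding a_r_coset_def' by blast
  obtain p where p: "p \<in> Q" "q = (\<alpha> ^^ n) p" using q(1) Q_period by blast
  then have "y = (\<alpha> ^^ n) (p \<oplus> x)" using q(2) Q_carrier x by auto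
  moreover have "p \<oplus> x \<in> Q +> x" using p(1) unfolding a_r_coset_def' by blast
  ultimately show "y \<in> bar_alpha (Q +> x)" unfolding bar_alpha_def by blast
qed

lemma bar_alpha_pow_coset:
  assumes "x \<in> carrier R"
  shows "(bar_alpha ^^ j) (Q +> x) = Q +> (\<alpha> ^^ (n * j)) x"
proof (induction j)
  case (Suc j)
  have "(bar_alpha ^^ Suc j) (Q +> x) = Q +> (\<alpha> ^^ n) ((\<alpha> ^^ (n * j)) x)"
    using Suc assms by (simp add: bar_alpha_coset)
  also have "(\<alpha> ^^ n) ((\<alpha> ^^ (n * j)) x) = (\<alpha> ^^ (n * Suc j)) x" by (simp add: funpow_add)
  finally show ?case .
qed simp

definition coset_rep :: "'a set \<Rightarrow> 'a" where
  "coset_rep X = (SOME x. x \<in> carrier R \<and> X = Q +> x \<and> (X = Q \<longrightarrow> x = \<zero>))"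

lemma coset_rep:
  assumes X: "X \<in> carrier (R Quot Q)"
  shows "coset_rep X \<in> carrier R" and "X = Q +> coset_rep X" and "X = Q \<Longrightarrow> coset_rep X = \<zero>"
proof -
  have "\<exists>x. x \<in> carrier R \<and> X = Q +> x \<and> (X = Q \<longrightarrow> x = \<zero>)"
  proof (cases "X = Q")
    case True
    then show ?thesis using Q.a_rcos_const[OF Q.zero_closed] by auto
  next
    case False
    then show ?thesis using X unfolding FactRing_def A_RCOSETS_def' by auto
  qed
  then have "coset_rep X \<in> carrier R \<and> X = Q +> coset_rep X \<and> (X = Q \<longrightarrow> coset_rep X = \<zero>)"
    unfolding coset_rep_def by (rule someI_ex)
  then show "coset_rep X \<in> carrier R" "X = Q +> coset_rep X" "X = Q \<Longrightarrow> coset_rep X = \<zero>"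
    by auto
qed

lemma Sbar_carrier: "F \<in> carrier Sbar \<longleftrightarrow> (\<forall>i. F i \<in> carrier (R Quot Q)) \<and> finite {i. F i \<noteq> Q}"
  by (simp add: skew_poly_def RQ_zero)

lemma Sbar_mult:
  "(F \<otimes>\<^bsub>Sbar\<^esub> G) m = (\<Oplus>\<^bsub>R Quot Q\<^esub> i \<in> {..m}. F i \<otimes>\<^bsub>R Quot Q\<^esub> (bar_alpha ^^ i) (G (m - i)))"
  by (simp add: skew_poly_def)

text \<open>The skew polynomials in \<open>\<theta>\<^sup>n\<close> form a subring of \<open>S\<close> that maps onto \<open>Sbar\<close> by reducing the
  coefficients modulo \<open>Q\<close>; this is possible because \<open>\<alpha>\<^sup>n(Q) = Q\<close>.\<close>

definition n_supported :: "(nat \<Rightarrow> 'a) set" where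
  "n_supported = {t \<in> carrier S. \<forall>k. \<not> n dvd k \<longrightarrow> t k = \<zero>}"

definition reduce :: "(nat \<Rightarrow> 'a) \<Rightarrow> nat \<Rightarrow> 'a set" where
  "reduce t = (\<lambda>m. Q +> t (m * n))"

definition lift :: "(nat \<Rightarrow> 'a set) \<Rightarrow> nat \<Rightarrow> 'a" where
  "lift F = (\<lambda>k. if n dvd k then coset_rep (F (k div n)) else \<zero>)"

lemma n_supported_carrier: "t \<in> n_supported \<Longrightarrow> t \<in> carrier S"
  unfolding n_supported_def by blast

lemma n_supported_mult:
  assumes x: "x \<in> n_supported" and y: "y \<in> n_supported"
  shows "x \<otimes>\<^bsub>S\<^esub> y \<in> n_supported"
proof -
  have xc: "x \<in> carrier S" and yc: "y \<in> carrier S" using x y n_supported_carrier by blast+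
  have "x i \<otimes> (\<alpha> ^^ i) (y (k - i)) = \<zero>" if "\<not> n dvd k" "i \<le> k" for i k
  proof (cases "n dvd i")
    case True
    then have "\<not> n dvd (k - i)" using that dvd_add[of n i "k - i"] by auto
    then show ?thesis using y S_coeff[OF xc] unfolding n_supported_def by simp
  next
    case False
    then show ?thesis using x S_coeff[OF yc] unfolding n_supported_def by simp
  qed
  then have "(x \<otimes>\<^bsub>S\<^esub> y) k = (\<Oplus>i \<in> {..k}. \<zero>)" if "\<not> n dvd k" for k
    unfolding S_mult using that by (intro finsum_cong') auto
  then have "(x \<otimes>\<^bsub>S\<^esub> y) k = \<zero>" if "\<not> n dvd k" for k using that by simp
  then show ?thesis unfolding n_supported_def using xc yc by simp
qed

lemma n_supported_subring: "subring n_supported S"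
proof (rule S.subringI)
  show "n_supported \<subseteq> carrier S" using n_supported_carrier by blast
  show "\<one>\<^bsub>S\<^esub> \<in> n_supported" unfolding n_supported_def using n_pos S.one_closed by (auto simp: S_one)
  fix x y assume x: "x \<in> n_supported" and y: "y \<in> n_supported"
  show "\<ominus>\<^bsub>S\<^esub> x \<in> n_supported"
    using x S.a_inv_closed[OF n_supported_carrier[OF x]] by (simp add: n_supported_def S_minus)
  show "x \<otimes>\<^bsub>S\<^esub> y \<in> n_supported" using x y by (rule n_supported_mult)
  show "x \<oplus>\<^bsub>S\<^esub> y \<in> n_supported"
    using x y S.a_closed[OF n_supported_carrier[OF x] n_supported_carrier[OF y]]
    by (simp add: n_supported_def S_add)
qed


lemma mult_n_inj: "inj (\<lambda>m::nat. m * n)"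
  using n_pos by (auto intro: injI)

lemma reduce_carrier:
  assumes u: "u \<in> carrier S"
  shows "reduce u \<in> carrier Sbar"
proof -
  have "{m. reduce u m \<noteq> Q} \<subseteq> (\<lambda>m. m * n) -` {k. u k \<noteq> \<zero>}"
    unfolding reduce_def by (auto simp: RQ_zero)
  moreover have "finite ((\<lambda>m. m * n) -` {k. u k \<noteq> \<zero>})"
    using u by (intro finite_vimageI[OF _ mult_n_inj]) (simp add: S_carrier)
  ultimately have "finite {m. reduce u m \<noteq> Q}" by (rule finite_subset)
  moreover have "reduce u m \<in> carrier (R Quot Q)" for m
    unfolding reduce_def using S_coeff[OF u] by simp
  ultimately show ?thesis unfolding Sbar_carrier by blast
qed

lemma reduce_add:
  assumes "u \<in> carrier S" "v \<in> carrier S"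
  shows "reduce (u \<oplus>\<^bsub>S\<^esub> v) = reduce u \<oplus>\<^bsub>Sbar\<^esub> reduce v"
proof
  fix m
  have "reduce (u \<oplus>\<^bsub>S\<^esub> v) m = (Q +> u (m * n)) \<oplus>\<^bsub>R Quot Q\<^esub> (Q +> v (m * n))"
    unfolding reduce_def S_add using assms S_coeff by simp
  then show "reduce (u \<oplus>\<^bsub>S\<^esub> v) m = (reduce u \<oplus>\<^bsub>Sbar\<^esub> reduce v) m"
    by (simp add: reduce_def skew_poly_def)
qed

lemma reduce_one: "reduce \<one>\<^bsub>S\<^esub> = \<one>\<^bsub>Sbar\<^esub>"
proof
  fix m
  show "reduce \<one>\<^bsub>S\<^esub> m = \<one>\<^bsub>Sbar\<^esub> m"
    using n_pos Q.a_rcos_const[OF Q.zero_closed]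
    by (cases "m = 0") (simp_all add: reduce_def skew_poly_def RQ_zero)
qed

lemma reduce_zero: "reduce \<zero>\<^bsub>S\<^esub> = \<zero>\<^bsub>Sbar\<^esub>"
  unfolding reduce_def using Q.a_rcos_const[OF Q.zero_closed] by (simp add: skew_poly_def RQ_zero)

text \<open>Only the terms \<open>i = j n\<close> of the convolution survive, and \<open>\<alpha>\<^sup>j\<^sup>n\<close> induces \<open>bar_alpha\<^sup>j\<close> on \<open>R/Q\<close>.\<close>

lemma reduce_mult:
  assumes u: "u \<in> n_supported" and v: "v \<in> n_supported"
  shows "reduce (u \<otimes>\<^bsub>S\<^esub> v) = reduce u \<otimes>\<^bsub>Sbar\<^esub> reduce v"
proof
  fix m
  have uc: "u \<in> carrier S" and vc: "v \<in> carrier S" using u v n_supported_carrier by blast+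
  define g where "g i = u i \<otimes> (\<alpha> ^^ i) (v (m * n - i))" for i
  have gc: "g \<in> B \<rightarrow> carrier R" for B unfolding g_def using S_coeff[OF uc] S_coeff[OF vc] by simp
  have "(u \<otimes>\<^bsub>S\<^esub> v) (m * n) = (\<Oplus>i \<in> (\<lambda>j. j * n) ` {..m}. g i)"
    unfolding S_mult g_def[symmetric]
  proof (rule add.finprod_mono_neutral_cong_right)
    fix i assume i: "i \<in> {..m * n} - (\<lambda>j. j * n) ` {..m}"
    then have "\<not> n dvd i" using n_pos by (auto elim!: dvdE simp: mult.commute)
    then show "g i = \<zero>" using u S_coeff[OF vc] unfolding g_def n_supported_def by simp
  qed (auto simp: gc)
  also have "\<dots> = (\<Oplus>j \<in> {..m}. g (j * n))"
    by (rule finsum_reindex[OF gc inj_on_subset[OF mult_n_inj subset_UNIV]])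
  finally have "reduce (u \<otimes>\<^bsub>S\<^esub> v) m = Q +> (\<Oplus>j \<in> {..m}. g (j * n))" by (simp add: reduce_def)
  also have "\<dots> = (\<Oplus>\<^bsub>R Quot Q\<^esub> j \<in> {..m}. Q +> g (j * n))"
    using H.hom_finsum[of "\<lambda>j. g (j * n)" "{..m}"] gc[of UNIV] by (simp add: comp_def Pi_def)
  also have "\<dots> = (\<Oplus>\<^bsub>R Quot Q\<^esub> j \<in> {..m}. reduce u j \<otimes>\<^bsub>R Quot Q\<^esub> (bar_alpha ^^ j) (reduce v (m - j)))"
  proof (rule RQ.finsum_cong'[OF refl])
    fix j assume "j \<in> {..m}"
    then have "m * n - j * n = (m - j) * n" by (simp add: diff_mult_distrib)
    then show "Q +> g (j * n) = reduce u j \<otimes>\<^bsub>R Quot Q\<^esub> (bar_alpha ^^ j) (reduce v (m - j))"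
      unfolding g_def reduce_def using S_coeff[OF uc] S_coeff[OF vc]
      by (simp add: bar_alpha_pow_coset mult.commute)
  qed (use S_coeff[OF uc] S_coeff[OF vc] in \<open>auto simp: reduce_def bar_alpha_pow_coset\<close>)
  finally show "reduce (u \<otimes>\<^bsub>S\<^esub> v) m = (reduce u \<otimes>\<^bsub>Sbar\<^esub> reduce v) m" unfolding Sbar_mult .
qed

lemma lift_n_supported:
  assumes F: "F \<in> carrier Sbar"
  shows "lift F \<in> n_supported"
proof -
  have Fc: "F i \<in> carrier (R Quot Q)" for i using F Sbar_carrier by blast
  have "{k. lift F k \<noteq> \<zero>} \<subseteq> (\<lambda>j. j * n) ` {i. F i \<noteq> Q}"
  proof
    fix k assume "k \<in> {k. lift F k \<noteq> \<zero>}"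
    then have k: "n dvd k" "coset_rep (F (k div n)) \<noteq> \<zero>" unfolding lift_def by (auto split: if_splits)
    then have "F (k div n) \<noteq> Q" using coset_rep(3)[OF Fc] by blast
    then show "k \<in> (\<lambda>j. j * n) ` {i. F i \<noteq> Q}" using k(1) by (intro image_eqI[of _ _ "k div n"]) auto
  qed
  then have "finite {k. lift F k \<noteq> \<zero>}" using finite_subset F Sbar_carrier by blast
  moreover have "lift F k \<in> carrier R" for k unfolding lift_def using coset_rep(1)[OF Fc] by simp
  ultimately show ?thesis unfolding n_supported_def S_carrier by (simp add: lift_def)
qed

lemma reduce_lift: "F \<in> carrier Sbar \<Longrightarrow> reduce (lift F) = F"
  unfolding reduce_def lift_def using n_pos coset_rep(2) Sbar_carrier by auto

lemma reduce_image: "reduce ` n_supported = carrier Sbar"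
proof
  show "reduce ` n_supported \<subseteq> carrier Sbar" using reduce_carrier n_supported_carrier by blast
  show "carrier Sbar \<subseteq> reduce ` n_supported"
    using reduce_lift lift_n_supported by (metis image_eqI subsetI)
qed

lemma Sbar_ring: "ring Sbar"
proof -
  have hom: "reduce \<in> ring_hom (S\<lparr>carrier := n_supported\<rparr>) Sbar"
    using reduce_carrier reduce_add reduce_mult reduce_one n_supported_carrier
    by (intro ring_hom_memI) auto
  have "ring (Sbar\<lparr>carrier := reduce ` n_supported, zero := reduce \<zero>\<^bsub>S\<^esub>\<rparr>)"
    using ring.ring_hom_imp_img_ring[OF S.subring_is_ring[OF n_supported_subring] hom] by simp
  then show ?thesis unfolding reduce_image reduce_zero by simp
qed

lemma reduce_eq_imp_minus_mem:
  assumes u: "u \<in> n_supported" and v: "v \<in> n_supported" and e: "reduce u = reduce v"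
  shows "u k \<ominus> v k \<in> Q"
proof (cases "n dvd k")
  case True
  then obtain m where k: "k = m * n" by (metis dvd_def mult.commute)
  have "Q +> u (m * n) = Q +> v (m * n)" using fun_cong[OF e, of m] unfolding reduce_def .
  then show ?thesis unfolding k
    using coset_eq_imp_minus_mem S_coeff n_supported_carrier u v by blast
next
  case False
  then show ?thesis using u v Q.zero_closed unfolding n_supported_def by (simp add: a_minus_def)
qed

end

context skew_poly_ring
begin

definition monomial :: "'a \<Rightarrow> nat \<Rightarrow> nat \<Rightarrow> 'a" where
  "monomial a d = (\<lambda>k. if k = d then a else \<zero>)"

lemma monomial_carrier: "a \<in> carrier R \<Longrightarrow> monomial a d \<in> carrier S"
  unfolding S_carrier monomial_def by (auto intro: finite_subset[of _ "{d}"])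

lemma const_poly_mult_monomial:
  "a \<in> carrier R \<Longrightarrow> const_poly a \<otimes>\<^bsub>S\<^esub> monomial \<one> d = monomial a d"
  using const_poly_mult_left[of a "monomial \<one> d"] by (auto simp: monomial_def fun_eq_iff)

end

locale minimal_prime_orbit_module =
  minimal_prime_orbit R \<alpha> n Q + rmod "skew_poly R \<alpha>" M madd mzero act
  for R :: "('a, 'b) ring_scheme" (structure) and \<alpha> n Q
    and M :: "'m set" and madd mzero act +
  assumes simple: "simple_right_module (skew_poly R \<alpha>) M madd mzero act"
    and faithful: "faithful_right_module (skew_poly R \<alpha>) M madd mzero act"
begin

definition killed_by_Q :: "'m \<Rightarrow> bool" where
  "killed_by_Q y \<longleftrightarrow> (\<forall>q\<in>Q. act y (const_poly q) = mzero)"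

text \<open>Peel off the top coefficient: \<open>h = h' + h\<^sub>d \<theta>\<^sup>d\<close>, and \<open>y h\<^sub>d = 0\<close> for \<open>h\<^sub>d \<in> Q\<close>.\<close>

lemma act_coeffs_in_Q:
  assumes y: "y \<in> M" "killed_by_Q y" and h: "h \<in> carrier S" "\<And>k. h k \<in> Q"
  shows "act y h = mzero"
proof -
  have bounded: "act y h = mzero" if "h \<in> carrier S" "\<forall>k. h k \<in> Q" "\<forall>k\<ge>d. h k = \<zero>" for h d
    using that
  proof (induction d arbitrary: h)
    case 0
    then have "h = \<zero>\<^bsub>S\<^esub>" by (auto simp: S_zero)
    then show ?case using y by simp
  next
    case (Suc d)
    define h' where "h' = (\<lambda>k. if k = d then \<zero> else h k)"
    have hd: "h d \<in> carrier R" using S_coeff[OF Suc.prems(1)] .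
    have h': "h' \<in> carrier S" unfolding h'_def
      by (rule S_carrierI[of _ h]) (use Suc.prems(1) in \<open>auto simp: S_coeff split: if_splits\<close>)
    have decomp: "h = h' \<oplus>\<^bsub>S\<^esub> (const_poly (h d) \<otimes>\<^bsub>S\<^esub> monomial \<one> d)"
      unfolding const_poly_mult_monomial[OF hd]
      using Suc.prems(1) by (auto simp: fun_eq_iff S_add h'_def monomial_def S_coeff)
    have "act y h = madd (act y h') (act (act y (const_poly (h d))) (monomial \<one> d))"
      using arg_cong[OF decomp, of "act y"] y(1) h' const_poly_carrier[OF hd] monomial_carrier[OF one_closed]
      by (simp add: act_add_right act_mult)
    moreover have "act y h' = mzero"
      using Suc.IH[OF h'] Suc.prems(2,3) Q.zero_closed unfolding h'_def by auto
    moreover have "act y (const_poly (h d)) = mzero" using y(2) Suc.prems(2) unfolding killed_by_Q_def by blast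
    ultimately show ?case using monomial_carrier[OF one_closed] by simp
  qed
  obtain d where "{k. h k \<noteq> \<zero>} \<subseteq> {..<d}"
    using finite_nat_bounded h(1) unfolding S_carrier by blast
  then have "\<forall>k\<ge>d. h k = \<zero>" by auto
  then show ?thesis using bounded h by blast
qed

lemma act_eq_if_coeffs_congruent:
  assumes y: "y \<in> M" "killed_by_Q y" and a: "a \<in> carrier S" and b: "b \<in> carrier S"
    and d: "\<And>k. a k \<ominus> b k \<in> Q"
  shows "act y a = act y b"
proof -
  define e where "e = (\<lambda>k. a k \<ominus> b k)"
  have e_carrier: "e \<in> carrier S"
  proof -
    have "{k. e k \<noteq> \<zero>} \<subseteq> {k. a k \<noteq> \<zero>} \<union> {k. b k \<noteq> \<zero>}"
      unfolding e_def using S_coeff[OF a] S_coeff[OF b] by auto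
    then show ?thesis
      using a b S_coeff[OF a] S_coeff[OF b] finite_subset unfolding S_carrier e_def by fastforce
  qed
  have "a = b \<oplus>\<^bsub>S\<^esub> e"
  proof
    fix k
    have "b k \<oplus> (a k \<ominus> b k) = a k" using S_coeff[OF a] S_coeff[OF b] by (simp add: a_minus_def) algebra
    then show "a k = (b \<oplus>\<^bsub>S\<^esub> e) k" unfolding S_add e_def by simp
  qed
  then have "act y a = madd (act y b) (act y e)" using act_add_right[OF y(1) b e_carrier] by simp
  also have "act y e = mzero" using act_coeffs_in_Q[OF y e_carrier] d unfolding e_def by blast
  finally show ?thesis using y(1) b by simp
qed

lemma killed_by_Q_act:
  assumes y: "y \<in> M" "killed_by_Q y" and t: "t \<in> n_supported"
  shows "killed_by_Q (act y t)"
  unfolding killed_by_Q_def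
proof
  fix q assume q: "q \<in> Q"
  have qc: "q \<in> carrier R" and tc: "t \<in> carrier S" using q Q_carrier t n_supported_carrier by auto
  have "(t \<otimes>\<^bsub>S\<^esub> const_poly q) k \<in> Q" for k
  proof (cases "n dvd k")
    case True
    then show ?thesis using const_poly_mult_right[OF qc S_coeff[OF tc]] pow_multiple_mem[OF q]
      Q.I_l_closed S_coeff[OF tc] by simp
  next
    case False
    then show ?thesis using const_poly_mult_right[OF qc S_coeff[OF tc]] t qc Q.zero_closed
      unfolding n_supported_def by simp
  qed
  then have "act y (t \<otimes>\<^bsub>S\<^esub> const_poly q) = mzero"
    using act_coeffs_in_Q[OF y] S.m_closed[OF tc const_poly_carrier[OF qc]] by blast
  then show "act (act y t) (const_poly q) = mzero" using act_mult[OF y(1) tc const_poly_carrier[OF qc]] by simp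
qed

definition n_part :: "(nat \<Rightarrow> 'a) \<Rightarrow> nat \<Rightarrow> 'a" where
  "n_part s = (\<lambda>k. if n dvd k then s k else \<zero>)"

lemma n_part_carrier: "s \<in> carrier S \<Longrightarrow> n_part s \<in> carrier S"
  unfolding n_part_def by (rule S_carrierI[of _ s]) (auto simp: S_coeff split: if_splits)

text \<open>Right multiplication by an element of \<open>rest_ideal\<close> pushes the coefficients of \<open>\<theta>\<^sup>k\<close>,
  \<open>n \<nmid> k\<close>, into \<open>Q\<close>, where a vector killed by \<open>Q\<close> no longer sees them.\<close>

lemma act_mult_rest_ideal:
  assumes y: "y \<in> M" "killed_by_Q y" and s: "s \<in> carrier S" and r: "r \<in> rest_ideal"
  shows "act y (s \<otimes>\<^bsub>S\<^esub> const_poly r) = act y (n_part s \<otimes>\<^bsub>S\<^esub> const_poly r)"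
    and "n_part s \<otimes>\<^bsub>S\<^esub> const_poly r \<in> n_supported"
proof -
  have rc: "r \<in> carrier R" using r unfolding rest_ideal_def by blast
  have ps: "n_part s \<in> carrier S" using n_part_carrier[OF s] .
  have c: "const_poly r \<in> carrier S" using const_poly_carrier[OF rc] .
  have e1: "(s \<otimes>\<^bsub>S\<^esub> const_poly r) k = s k \<otimes> (\<alpha> ^^ k) r" for k
    using const_poly_mult_right[OF rc S_coeff[OF s]] .
  have e2: "(n_part s \<otimes>\<^bsub>S\<^esub> const_poly r) k = n_part s k \<otimes> (\<alpha> ^^ k) r" for k
    using const_poly_mult_right[OF rc S_coeff[OF ps]] .
  show "act y (s \<otimes>\<^bsub>S\<^esub> const_poly r) = act y (n_part s \<otimes>\<^bsub>S\<^esub> const_poly r)"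
  proof (rule act_eq_if_coeffs_congruent[OF y S.m_closed[OF s c] S.m_closed[OF ps c]])
    fix k
    show "(s \<otimes>\<^bsub>S\<^esub> const_poly r) k \<ominus> (n_part s \<otimes>\<^bsub>S\<^esub> const_poly r) k \<in> Q"
    proof (cases "n dvd k")
      case True
      then show ?thesis unfolding e1 e2
        using S_coeff[OF s] rc Q.zero_closed by (simp add: n_part_def a_minus_def r_neg)
    next
      case False
      then show ?thesis unfolding e1 e2
        using Q.I_l_closed[OF rest_ideal_pow_mem[OF r False] S_coeff[OF s]] S_coeff[OF s] rc
        by (simp add: n_part_def a_minus_def)
    qed
  qed
  have "(n_part s \<otimes>\<^bsub>S\<^esub> const_poly r) k = \<zero>" if "\<not> n dvd k" for k
    unfolding e2 using that rc by (simp add: n_part_def)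
  then show "n_part s \<otimes>\<^bsub>S\<^esub> const_poly r \<in> n_supported"
    unfolding n_supported_def using S.m_closed[OF ps c] by simp
qed

lemma act_eq_if_reduce_eq:
  assumes "y \<in> M" "killed_by_Q y" and "u \<in> n_supported" "v \<in> n_supported" and "reduce u = reduce v"
  shows "act y u = act y v"
  using act_eq_if_coeffs_congruent[OF assms(1,2)] reduce_eq_imp_minus_mem[OF assms(3-5)]
    n_supported_carrier assms(3,4) by blast

text \<open>The module over \<open>Sbar\<close>: the \<open>\<theta>\<^sup>n\<close>-submodule \<open>x\<^sub>0 S\<^sub>n\<close> generated by \<open>x\<^sub>0 = m\<^sub>0 r\<^sub>0\<close>, where
  \<open>r\<^sub>0 \<in> rest_ideal - Q\<close> and \<open>m\<^sub>0 r\<^sub>0 \<noteq> 0\<close> by faithfulness. It is killed by \<open>Q\<close>, so \<open>Sbar\<close> acts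
  on it through arbitrary lifts.\<close>

definition r0 :: 'a where "r0 = (SOME r. r \<in> rest_ideal \<and> r \<notin> Q)"

definition m0 :: 'm where "m0 = (SOME m. m \<in> M \<and> act m (const_poly r0) \<noteq> mzero)"

definition x0 :: 'm where "x0 = act m0 (const_poly r0)"

definition N :: "'m set" where "N = {act x0 t | t. t \<in> n_supported}"

definition act_bar :: "'m \<Rightarrow> (nat \<Rightarrow> 'a set) \<Rightarrow> 'm" where "act_bar y F = act y (lift F)"

lemma r0: "r0 \<in> rest_ideal" "r0 \<notin> Q" "r0 \<in> carrier R"
proof -
  show "r0 \<in> rest_ideal" "r0 \<notin> Q" using someI_ex[OF rest_ideal_not_subset] unfolding r0_def by blast+
  then show "r0 \<in> carrier R" unfolding rest_ideal_def by blast
qed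

lemma m0: "m0 \<in> M" "act m0 (const_poly r0) \<noteq> mzero"
proof -
  have "const_poly r0 \<noteq> \<zero>\<^bsub>S\<^esub>"
  proof
    assume "const_poly r0 = \<zero>\<^bsub>S\<^esub>"
    then have "r0 = \<zero>" using fun_cong[of _ _ 0] by (fastforce simp: const_poly_def S_zero)
    then show False using r0(2) Q.zero_closed by simp
  qed
  then have "\<exists>m. m \<in> M \<and> act m (const_poly r0) \<noteq> mzero"
    using faithful const_poly_carrier[OF r0(3)] unfolding faithful_right_module_def by blast
  from someI_ex[OF this] show "m0 \<in> M" "act m0 (const_poly r0) \<noteq> mzero" unfolding m0_def by blast+
qed

lemma x0: "x0 \<in> M" "x0 \<noteq> mzero"
  unfolding x0_def using m0 const_poly_carrier[OF r0(3)] by simp_all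

lemma x0_killed: "killed_by_Q x0"
  unfolding killed_by_Q_def
proof
  fix q assume q: "q \<in> Q"
  have qc: "q \<in> carrier R" using q Q_carrier by blast
  have "const_poly r0 \<otimes>\<^bsub>S\<^esub> const_poly q = \<zero>\<^bsub>S\<^esub>"
  proof
    fix k
    have "(const_poly r0 \<otimes>\<^bsub>S\<^esub> const_poly q) k = r0 \<otimes> const_poly q k"
      using const_poly_mult_left[OF r0(3)] S_coeff[OF const_poly_carrier[OF qc]] by blast
    then show "(const_poly r0 \<otimes>\<^bsub>S\<^esub> const_poly q) k = \<zero>\<^bsub>S\<^esub> k"
      using rest_ideal_mult_Q[OF r0(1) q] r0(3) by (simp add: const_poly_def S_zero)
  qed
  then show "act x0 (const_poly q) = mzero"
    unfolding x0_def using act_mult[OF m0(1) const_poly_carrier[OF r0(3)] const_poly_carrier[OF qc]] m0(1)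
    by simp
qed

lemma N_subset: "N \<subseteq> M"
  unfolding N_def using x0(1) n_supported_carrier by auto

lemma N_killed: "y \<in> N \<Longrightarrow> killed_by_Q y"
  unfolding N_def using killed_by_Q_act[OF x0(1) x0_killed] by blast

lemma act_N:
  assumes "y \<in> N" and t: "t \<in> n_supported"
  shows "act y t \<in> N"
proof -
  obtain t' where t': "t' \<in> n_supported" "y = act x0 t'" using assms(1) unfolding N_def by blast
  then have "act y t = act x0 (t' \<otimes>\<^bsub>S\<^esub> t)" using act_mult[OF x0(1)] n_supported_carrier t by simp
  then show ?thesis using n_supported_mult[OF t'(1) t] unfolding N_def by blast
qed

lemma x0_in_N: "x0 \<in> N"
  unfolding N_def using x0(1) subringE(3)[OF n_supported_subring] by (intro CollectI exI[of _ "\<one>\<^bsub>S\<^esub>"]) simp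

lemma N_subgroup: "subgroup N G"
proof
  show "N \<subseteq> carrier G" using N_subset by simp
  show "\<one>\<^bsub>G\<^esub> \<in> N"
    using x0(1) subringE(2)[OF n_supported_subring] unfolding N_def
    by (intro CollectI exI[of _ "\<zero>\<^bsub>S\<^esub>"]) simp
next
  fix a b assume "a \<in> N" "b \<in> N"
  then obtain s t where st: "s \<in> n_supported" "t \<in> n_supported" "a = act x0 s" "b = act x0 t"
    unfolding N_def by blast
  then have "a \<otimes>\<^bsub>G\<^esub> b = act x0 (s \<oplus>\<^bsub>S\<^esub> t)" using act_add_right[OF x0(1)] n_supported_carrier by simp
  then show "a \<otimes>\<^bsub>G\<^esub> b \<in> N" using subringE(7)[OF n_supported_subring st(1,2)] unfolding N_def by blast
next
  fix a assume "a \<in> N"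
  then obtain s where s: "s \<in> n_supported" "a = act x0 s" unfolding N_def by blast
  then have "inv\<^bsub>G\<^esub> a = act x0 (\<ominus>\<^bsub>S\<^esub> s)" using act_minus[OF x0(1)] n_supported_carrier by simp
  then show "inv\<^bsub>G\<^esub> a \<in> N" using subringE(5)[OF n_supported_subring s(1)] unfolding N_def by blast
qed

lemma act_lift_reduce: "y \<in> N \<Longrightarrow> w \<in> n_supported \<Longrightarrow> act y (lift (reduce w)) = act y w"
  using act_eq_if_reduce_eq[of y "lift (reduce w)" w] N_subset N_killed
    lift_n_supported reduce_lift reduce_carrier n_supported_carrier
  by blast

lemma N_right_module: "right_module Sbar N madd mzero act_bar"
  unfolding right_module_def
proof (intro conjI ballI)
  interpret Sbar: ring Sbar by (rule Sbar_ring)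
  show "ring Sbar" by (rule Sbar.ring_axioms)
  show "comm_group \<lparr>carrier = N, mult = madd, one = mzero\<rparr>"
    using group.group_comm_groupI[OF subgroup.subgroup_is_group[OF N_subgroup G.is_group]]
      N_subset madd_comm by (auto simp: subset_iff)
  have lifts: "lift F \<in> n_supported" "lift F \<in> carrier S" if "F \<in> carrier Sbar" for F
    using lift_n_supported[OF that] n_supported_carrier by auto
  fix m F G assume m: "m \<in> N" and F: "F \<in> carrier Sbar" and G: "G \<in> carrier Sbar"
  have mM: "m \<in> M" using m N_subset by blast
  show "act_bar m F \<in> N" unfolding act_bar_def using act_N[OF m lifts(1)[OF F]] .
  have "act m (lift (F \<oplus>\<^bsub>Sbar\<^esub> G)) = act m (lift F \<oplus>\<^bsub>S\<^esub> lift G)"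
    using act_eq_if_reduce_eq[OF mM N_killed[OF m]] lifts F G Sbar.a_closed
      subringE(7)[OF n_supported_subring] reduce_add reduce_lift by simp
  then show "act_bar m (F \<oplus>\<^bsub>Sbar\<^esub> G) = madd (act_bar m F) (act_bar m G)"
    unfolding act_bar_def using act_add_right[OF mM] lifts F G by simp
  have "act m (lift (F \<otimes>\<^bsub>Sbar\<^esub> G)) = act m (lift F \<otimes>\<^bsub>S\<^esub> lift G)"
    using act_eq_if_reduce_eq[OF mM N_killed[OF m]] lifts F G Sbar.m_closed
      n_supported_mult reduce_mult reduce_lift by simp
  then show "act_bar m (F \<otimes>\<^bsub>Sbar\<^esub> G) = act_bar (act_bar m F) G"
    unfolding act_bar_def using act_mult[OF mM] lifts F G by simp
next
  fix m m' F assume "m \<in> N" "m' \<in> N" "F \<in> carrier Sbar"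
  then show "act_bar (madd m m') F = madd (act_bar m F) (act_bar m' F)"
    unfolding act_bar_def using N_subset lift_n_supported n_supported_carrier act_add_left by blast
next
  fix m assume m: "m \<in> N"
  have "act m (lift \<one>\<^bsub>Sbar\<^esub>) = act m \<one>\<^bsub>S\<^esub>"
    using act_eq_if_reduce_eq[OF _ N_killed[OF m]] m N_subset lift_n_supported subringE(3)[OF n_supported_subring]
      ring.ring_simprules(6)[OF Sbar_ring] reduce_lift reduce_one by auto
  then show "act_bar m \<one>\<^bsub>Sbar\<^esub> = m" unfolding act_bar_def using m N_subset by auto
qed

text \<open>Any nonzero \<open>x \<in> N\<close> generates \<open>m\<^sub>0\<close> over \<open>S\<close>, hence \<open>x\<^sub>0 = x s r\<^sub>0 = x (n_part s) r\<^sub>0\<close>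
  with \<open>(n_part s) r\<^sub>0 \<in> S\<^sub>n\<close>.\<close>

lemma N_generated:
  assumes x: "x \<in> N" "x \<noteq> mzero"
  obtains w where "w \<in> n_supported" "x0 = act x w"
proof -
  have xM: "x \<in> M" using x(1) N_subset by blast
  obtain s where s: "s \<in> carrier S" "m0 = act x s" using simple_cyclic[OF simple xM x(2) m0(1)] by blast
  have "x0 = act x (s \<otimes>\<^bsub>S\<^esub> const_poly r0)"
    unfolding x0_def s(2) using act_mult[OF xM s(1) const_poly_carrier[OF r0(3)]] by simp
  also have "\<dots> = act x (n_part s \<otimes>\<^bsub>S\<^esub> const_poly r0)"
    using act_mult_rest_ideal(1)[OF xM N_killed[OF x(1)] s(1) r0(1)] .
  finally show thesis using that act_mult_rest_ideal(2)[OF xM N_killed[OF x(1)] s(1) r0(1)] by blast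
qed

lemma N_simple: "simple_right_module Sbar N madd mzero act_bar"
  unfolding simple_right_module_def
proof (intro conjI allI impI)
  show "right_module Sbar N madd mzero act_bar" by (rule N_right_module)
  show "N \<noteq> {mzero}" using x0_in_N x0(2) by blast
next
  fix N' assume sub: "submodule Sbar N' N madd mzero act_bar"
  then have sg: "subgroup N' \<lparr>carrier = N, mult = madd, one = mzero\<rparr>"
    and act': "\<And>m F. m \<in> N' \<Longrightarrow> F \<in> carrier Sbar \<Longrightarrow> act_bar m F \<in> N'"
    unfolding submodule_def by blast+
  have N'N: "N' \<subseteq> N" using subgroup.subset[OF sg] by simp
  show "N' = {mzero} \<or> N' = N"
  proof (cases "N' \<subseteq> {mzero}")
    case True
    then show ?thesis using subgroup.one_closed[OF sg] by auto
  next
    case False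
    then obtain x where x: "x \<in> N'" "x \<noteq> mzero" by blast
    then obtain w where w: "w \<in> n_supported" "x0 = act x w" using N_generated N'N by blast
    have "y \<in> N'" if "y \<in> N" for y
    proof -
      obtain t where t: "t \<in> n_supported" "y = act x0 t" using \<open>y \<in> N\<close> unfolding N_def by blast
      have "y = act x (w \<otimes>\<^bsub>S\<^esub> t)"
        using t w act_mult[of x w t] N'N x(1) N_subset n_supported_carrier by auto
      also have "\<dots> = act_bar x (reduce (w \<otimes>\<^bsub>S\<^esub> t))"
        unfolding act_bar_def using act_lift_reduce N'N x(1) n_supported_mult[OF w(1) t(1)] by auto
      finally show ?thesis
        using act'[OF x(1)] reduce_carrier n_supported_carrier n_supported_mult[OF w(1) t(1)] by auto
    qed
    then show ?thesis using N'N by blast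
  qed
qed

lemma N_faithful: "faithful_right_module Sbar N madd mzero act_bar"
  unfolding faithful_right_module_def
proof (intro conjI ballI impI)
  show "right_module Sbar N madd mzero act_bar" by (rule N_right_module)
  fix F assume F: "F \<in> carrier Sbar" and z: "\<forall>m\<in>N. act_bar m F = mzero"
  define t where "t = lift F"
  have t: "t \<in> n_supported" "t \<in> carrier S" unfolding t_def using lift_n_supported[OF F] n_supported_carrier by auto
  have c: "const_poly r0 \<in> carrier S" using const_poly_carrier[OF r0(3)] .
  have "act m (const_poly r0 \<otimes>\<^bsub>S\<^esub> t) = mzero" if m: "m \<in> M" for m
  proof (cases "m = mzero")
    case True
    then show ?thesis using S.m_closed[OF c t(2)] by simp
  next
    case False
    obtain s where s: "s \<in> carrier S" "m = act x0 s" using simple_cyclic[OF simple x0(1) x0(2) m] by blast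
    have "act m (const_poly r0 \<otimes>\<^bsub>S\<^esub> t) = act (act x0 (s \<otimes>\<^bsub>S\<^esub> const_poly r0)) t"
      using act_mult[OF m c t(2)] act_mult[OF x0(1) s(1) c] s(2) by simp
    also have "\<dots> = act_bar (act x0 (n_part s \<otimes>\<^bsub>S\<^esub> const_poly r0)) F"
      unfolding act_bar_def t_def using act_mult_rest_ideal(1)[OF x0(1) x0_killed s(1) r0(1)] by simp
    also have "\<dots> = mzero"
      using z act_mult_rest_ideal(2)[OF x0(1) x0_killed s(1) r0(1)] unfolding N_def by blast
    finally show ?thesis .
  qed
  then have "const_poly r0 \<otimes>\<^bsub>S\<^esub> t = \<zero>\<^bsub>S\<^esub>"
    using faithful S.m_closed[OF c t(2)] unfolding faithful_right_module_def by blast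
  then have "r0 \<otimes> t k \<in> Q" for k
    using const_poly_mult_left[of r0 t k] r0(3) S_coeff[OF t(2)] Q.zero_closed by (simp add: S_zero)
  then have "t k \<in> Q" for k using primeideal.I_prime[OF Q_prime r0(3) S_coeff[OF t(2)]] r0(2) by blast
  then have "reduce t = \<zero>\<^bsub>Sbar\<^esub>" by (simp add: reduce_def skew_poly_def RQ_zero Q.a_rcos_const)
  then show "F = \<zero>\<^bsub>Sbar\<^esub>" using reduce_lift[OF F] unfolding t_def by simp
qed

lemma primitive_Sbar: "primitive Sbar"
  using primitiveI[OF N_simple N_faithful] .

end

lemma primitive_reduction:
  assumes "minimal_prime_orbit R \<alpha> n Q" and "primitive (skew_poly R \<alpha>)"
  shows "primitive (skew_poly (R Quot Q) (\<lambda>X. (\<alpha> ^^ n) ` X))"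
proof -
  obtain M :: "(nat \<Rightarrow> 'a) set set" and madd mzero act where
    simple: "simple_right_module (skew_poly R \<alpha>) M madd mzero act" and
    faithful: "faithful_right_module (skew_poly R \<alpha>) M madd mzero act"
    using assms(2) unfolding primitive_def by blast
  have "right_module (skew_poly R \<alpha>) M madd mzero act" using simple unfolding simple_right_module_def by blast
  then interpret minimal_prime_orbit_module R \<alpha> n Q M madd mzero act
    using assms(1) simple faithful
    by (intro minimal_prime_orbit_module.intro rmod.intro minimal_prime_orbit_module_axioms.intro)
  have "bar_alpha = (\<lambda>X. (\<alpha> ^^ n) ` X)" by (rule ext) (simp add: bar_alpha_def)
  with primitive_Sbar show ?thesis by simp
qed

theorem lemma4p5:
  fixes R :: "('a, 'b) ring_scheme" and \<alpha> :: "'a \<Rightarrow> 'a"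
  assumes "cring R"
    and "noetherian_ring R"
    and "\<alpha> \<in> ring_iso R R"
    and "prime_ring (skew_poly R \<alpha>)"
  shows "alpha_prime_ring R \<alpha> \<and>
         (\<exists>(n::nat) Q. 0 < n \<and> primeideal Q R \<and>
            inj_on (\<lambda>i. (\<alpha> ^^ i) ` Q) {..<n} \<and>
            {P. minimal_prime R P} = (\<lambda>i. (\<alpha> ^^ i) ` Q) ` {..<n} \<and>
            (\<alpha> ^^ n) ` Q = Q \<and>
            (\<Inter>i\<in>{..<n}. (\<alpha> ^^ i) ` Q) = {\<zero>\<^bsub>R\<^esub>}) \<and>
         (\<forall>(n::nat) Q. (0 < n \<and> primeideal Q R \<and>
            inj_on (\<lambda>i. (\<alpha> ^^ i) ` Q) {..<n} \<and>
            {P. minimal_prime R P} = (\<lambda>i. (\<alpha> ^^ i) ` Q) ` {..<n} \<and>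
            (\<alpha> ^^ n) ` Q = Q \<and>
            (\<Inter>i\<in>{..<n}. (\<alpha> ^^ i) ` Q) = {\<zero>\<^bsub>R\<^esub>}) \<longrightarrow>
          primitive (skew_poly R \<alpha>) \<longrightarrow>
          primitive (skew_poly (R Quot Q) (\<lambda>X. (\<alpha> ^^ n) ` X)))"
proof -
  have "ring (skew_poly R \<alpha>)" using assms(4) unfolding prime_ring_def by blast
  then interpret skew_poly_ring R \<alpha>
    using assms(1,3)
    by (intro skew_poly_ring.intro cring_automorphism.intro cring_automorphism_axioms.intro
        skew_poly_ring_axioms.intro)
  have ap: "alpha_prime_ring R \<alpha>" using alpha_prime_if_prime_skew_poly[OF assms(4)] .
  show ?thesis
  proof (intro conjI allI impI)
    show "\<exists>n Q. 0 < n \<and> primeideal Q R \<and> inj_on (\<lambda>i. (\<alpha> ^^ i) ` Q) {..<n} \<and>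
            {P. minimal_prime R P} = (\<lambda>i. (\<alpha> ^^ i) ` Q) ` {..<n} \<and> (\<alpha> ^^ n) ` Q = Q \<and>
            (\<Inter>i\<in>{..<n}. (\<alpha> ^^ i) ` Q) = {\<zero>\<^bsub>R\<^esub>}"
      using minimal_primes_single_orbit[OF assms(2) ap one_ne_zero_if_prime_skew_poly[OF assms(4)]]
      unfolding orbit_def .
    fix n Q assume "0 < n \<and> primeideal Q R \<and> inj_on (\<lambda>i. (\<alpha> ^^ i) ` Q) {..<n} \<and>
            {P. minimal_prime R P} = (\<lambda>i. (\<alpha> ^^ i) ` Q) ` {..<n} \<and> (\<alpha> ^^ n) ` Q = Q \<and>
            (\<Inter>i\<in>{..<n}. (\<alpha> ^^ i) ` Q) = {\<zero>\<^bsub>R\<^esub>}"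
    then have "minimal_prime_orbit R \<alpha> n Q"
      by (intro minimal_prime_orbit.intro skew_poly_ring_axioms minimal_prime_orbit_axioms.intro)
        (simp_all add: orbit_def)
    then show "primitive (skew_poly R \<alpha>) \<Longrightarrow> primitive (skew_poly (R Quot Q) (\<lambda>X. (\<alpha> ^^ n) ` X))"
      by (rule primitive_reduction)
  qed (rule ap)
qed

end
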